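(* If $A$ is $1$-Q-Koszul, i.e. $A_0$ is quasi-hereditary with weight poset $\Lambda$ and for all $\lambda,\mu\in\Lambda$ and all $m\in\mathbb Z$, ${\rm ext}^1_A(\Delta^0(\lambda),\nabla_0(\mu)\langle m\rangle)\neq0$ implies $m=1$, then $A$ is tight, i.e. $A$ is generated as an algebra by $A_0$ and $A_1$ (equivalently $A_n=A_1\cdots A_1$ ($n$ factors) for all $n\ge1$).
   Context: Let $k$ be an algebraically closed field and $A=\bigoplus_{i\ge 0}A_i$ a finite-dimensional positively graded $k$-algebra. $A$-grmod is the category of finite-dimensional $\mathbb Z$-graded left $A$-modules; $M\langle r\rangle_i=M_{i-r}$; ${\rm ext}^n_A$ denotes Ext in $A$-grmod. $A_0$-modules are regarded as graded $A$-modules concentrated in grade $0$ via $A\to A/A_{\ge1}\cong A_0$. When $A_0$ is quasi-hereditary with weight poset $\Lambda$, $\Delta^0(\lambda)$ and $\nabla_0(\lambda)$ denote its standard and costandard modules. *)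

theory Defs
  imports Main "HOL-Computational_Algebra.Polynomial"
begin

text \<open>The algebra A is the whole type 'a (a ring with 1), a k-algebra via scale,
  with grading Agr i = A_i (i a natural number).\<close>

definition graded_decomp :: "(nat \<Rightarrow> 'a::ring_1 set) \<Rightarrow> 'a \<Rightarrow> (nat \<Rightarrow> 'a) \<Rightarrow> bool" where
  "graded_decomp Agr x c \<longleftrightarrow>
     (\<forall>i. c i \<in> Agr i) \<and> finite {i. c i \<noteq> 0} \<and> x = (\<Sum>i\<in>{i. c i \<noteq> 0}. c i)"

definition hcomp :: "(nat \<Rightarrow> 'a::ring_1 set) \<Rightarrow> nat \<Rightarrow> 'a \<Rightarrow> 'a" where
  "hcomp Agr i x = (THE c. graded_decomp Agr x c) i"

definition fd_pos_graded_algebra ::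
  "('k::field \<Rightarrow> 'a::ring_1 \<Rightarrow> 'a) \<Rightarrow> (nat \<Rightarrow> 'a set) \<Rightarrow> bool" where
  "fd_pos_graded_algebra scale Agr \<longleftrightarrow>
     Vector_Spaces.vector_space scale \<and>
     (\<forall>c x y. scale c (x * y) = scale c x * y \<and> scale c (x * y) = x * scale c y) \<and>
     (\<exists>B. finite B \<and> module.span scale B = UNIV) \<and>
     (\<forall>i. module.subspace scale (Agr i)) \<and>
     (\<forall>i j. \<forall>x\<in>Agr i. \<forall>y\<in>Agr j. x * y \<in> Agr (i + j)) \<and>
     1 \<in> Agr 0 \<and>
     (\<forall>x. \<exists>!c. graded_decomp Agr x c)"

inductive_set alg_gen :: "('k::field \<Rightarrow> 'a::ring_1 \<Rightarrow> 'a) \<Rightarrow> 'a set \<Rightarrow> 'a set"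
  for scale S where
  base: "x \<in> S \<Longrightarrow> x \<in> alg_gen scale S"
| one: "1 \<in> alg_gen scale S"
| add: "x \<in> alg_gen scale S \<Longrightarrow> y \<in> alg_gen scale S \<Longrightarrow> x + y \<in> alg_gen scale S"
| mult: "x \<in> alg_gen scale S \<Longrightarrow> y \<in> alg_gen scale S \<Longrightarrow> x * y \<in> alg_gen scale S"
| smult: "x \<in> alg_gen scale S \<Longrightarrow> scale c x \<in> alg_gen scale S"

text \<open>The k-structure is the action
  of the scalars scale c 1 of A.\<close>

record ('a, 'm) gmod =
  gcar :: "'m set"
  gzero :: 'm
  gadd :: "'m \<Rightarrow> 'm \<Rightarrow> 'm"
  gact :: "'a \<Rightarrow> 'm \<Rightarrow> 'm"
  gdeg :: "int \<Rightarrow> 'm set"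

definition gsum :: "('a, 'm) gmod \<Rightarrow> (int \<Rightarrow> 'm) \<Rightarrow> int set \<Rightarrow> 'm" where
  "gsum M c I = foldr (\<lambda>i acc. gadd M (c i) acc) (sorted_list_of_set I) (gzero M)"

definition is_gmod ::
  "('k::field \<Rightarrow> 'a::ring_1 \<Rightarrow> 'a) \<Rightarrow> (nat \<Rightarrow> 'a set) \<Rightarrow> ('a, 'm) gmod \<Rightarrow> bool" where
  "is_gmod scale Agr M \<longleftrightarrow>
     \<comment> \<open>abelian group\<close>
     gzero M \<in> gcar M \<and>
     (\<forall>x\<in>gcar M. \<forall>y\<in>gcar M. gadd M x y \<in> gcar M) \<and>
     (\<forall>x\<in>gcar M. \<forall>y\<in>gcar M. \<forall>z\<in>gcar M. gadd M (gadd M x y) z = gadd M x (gadd M y z)) \<and>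
     (\<forall>x\<in>gcar M. \<forall>y\<in>gcar M. gadd M x y = gadd M y x) \<and>
     (\<forall>x\<in>gcar M. gadd M (gzero M) x = x) \<and>
     (\<forall>x\<in>gcar M. \<exists>y\<in>gcar M. gadd M x y = gzero M) \<and>
     \<comment> \<open>left A-module\<close>
     (\<forall>a. \<forall>x\<in>gcar M. gact M a x \<in> gcar M) \<and>
     (\<forall>a. \<forall>x\<in>gcar M. \<forall>y\<in>gcar M. gact M a (gadd M x y) = gadd M (gact M a x) (gact M a y)) \<and>
     (\<forall>a b. \<forall>x\<in>gcar M. gact M (a + b) x = gadd M (gact M a x) (gact M b x)) \<and>
     (\<forall>a b. \<forall>x\<in>gcar M. gact M (a * b) x = gact M a (gact M b x)) \<and>
     (\<forall>x\<in>gcar M. gact M 1 x = x) \<and>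
     \<comment> \<open>grading: homogeneous components are subspaces, compatible with the grading of A,
         and M is their direct sum\<close>
     (\<forall>i. gdeg M i \<subseteq> gcar M \<and> gzero M \<in> gdeg M i \<and>
          (\<forall>x\<in>gdeg M i. \<forall>y\<in>gdeg M i. gadd M x y \<in> gdeg M i) \<and>
          (\<forall>c. \<forall>x\<in>gdeg M i. gact M (scale c 1) x \<in> gdeg M i)) \<and>
     (\<forall>i j. \<forall>a\<in>Agr i. \<forall>x\<in>gdeg M j. gact M a x \<in> gdeg M (int i + j)) \<and>
     (\<forall>x\<in>gcar M. \<exists>!c. (\<forall>i. c i \<in> gdeg M i) \<and> finite {i. c i \<noteq> gzero M} \<and>
                        x = gsum M c {i. c i \<noteq> gzero M}) \<and>
     \<comment> \<open>finite-dimensional over k: k-linear injection into k^n\<close>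
     (\<exists>(n::nat) (f :: 'm \<Rightarrow> nat \<Rightarrow> 'k). inj_on f (gcar M) \<and>
        (\<forall>x\<in>gcar M. \<forall>i\<ge>n. f x i = 0) \<and>
        (\<forall>x\<in>gcar M. \<forall>y\<in>gcar M. f (gadd M x y) = (\<lambda>i. f x i + f y i)) \<and>
        (\<forall>c. \<forall>x\<in>gcar M. f (gact M (scale c 1) x) = (\<lambda>i. c * f x i)))"

definition gmod_hom :: "('a, 'm) gmod \<Rightarrow> ('a, 'n) gmod \<Rightarrow> ('m \<Rightarrow> 'n) \<Rightarrow> bool" where
  "gmod_hom M N f \<longleftrightarrow>
     (\<forall>x\<in>gcar M. f x \<in> gcar N) \<and>
     (\<forall>x\<in>gcar M. \<forall>y\<in>gcar M. f (gadd M x y) = gadd N (f x) (f y)) \<and>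
     (\<forall>a. \<forall>x\<in>gcar M. f (gact M a x) = gact N a (f x)) \<and>
     (\<forall>i. \<forall>x\<in>gdeg M i. f x \<in> gdeg N i)"

definition shift :: "int \<Rightarrow> ('a, 'm) gmod \<Rightarrow> ('a, 'm) gmod" where
  "shift r M = M\<lparr>gdeg := (\<lambda>i. gdeg M (i - r))\<rparr>"

text \<open>ext^1_A(M,N) \<noteq> 0 in A-grmod (Yoneda description): there is a non-split short exact
  sequence 0 \<rightarrow> N \<rightarrow> E \<rightarrow> M \<rightarrow> 0 in A-grmod. Every such E is, as graded abelian group,
  isomorphic to N \<times> M with the canonical inclusion and projection, so E is taken on
  that carrier.\<close>
definition ext1_nonzero ::
  "('k::field \<Rightarrow> 'a::ring_1 \<Rightarrow> 'a) \<Rightarrow> (nat \<Rightarrow> 'a set) \<Rightarrow> ('a, 'm) gmod \<Rightarrow> ('a, 'n) gmod \<Rightarrow> bool" where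
  "ext1_nonzero scale Agr M N \<longleftrightarrow>
     (\<exists>E :: ('a, 'n \<times> 'm) gmod.
        is_gmod scale Agr E \<and>
        gcar E = gcar N \<times> gcar M \<and>
        gzero E = (gzero N, gzero M) \<and>
        (\<forall>x y. gadd E x y = (gadd N (fst x) (fst y), gadd M (snd x) (snd y))) \<and>
        (\<forall>i. gdeg E i = gdeg N i \<times> gdeg M i) \<and>
        gmod_hom N E (\<lambda>n. (n, gzero M)) \<and>
        gmod_hom E M snd \<and>
        \<not> (\<exists>s. gmod_hom M E s \<and> (\<forall>x\<in>gcar M. snd (s x) = x)))"

definition prim_idem :: "'a::ring_1 set \<Rightarrow> 'a \<Rightarrow> bool" where
  "prim_idem A0 e \<longleftrightarrow> e \<in> A0 \<and> e * e = e \<and> e \<noteq> 0 \<and>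
     \<not> (\<exists>f\<in>A0. \<exists>g\<in>A0. f * f = f \<and> g * g = g \<and> f * g = 0 \<and> g * f = 0 \<and>
          f \<noteq> 0 \<and> g \<noteq> 0 \<and> e = f + g)"

text \<open>left ideal A0 e (the indecomposable projective A0-module P(lambda))\<close>
definition lideal :: "'a::ring_1 set \<Rightarrow> 'a \<Rightarrow> 'a set" where
  "lideal A0 e = {a * e | a. a \<in> A0}"

definition lsub :: "'a::ring_1 set \<Rightarrow> 'a set \<Rightarrow> bool" where
  "lsub A0 X \<longleftrightarrow> X \<subseteq> A0 \<and> 0 \<in> X \<and> (\<forall>x\<in>X. \<forall>y\<in>X. x + y \<in> X) \<and> (\<forall>a\<in>A0. \<forall>x\<in>X. a * x \<in> X)"

definition liso :: "'a::ring_1 set \<Rightarrow> 'a set \<Rightarrow> 'a set \<Rightarrow> bool" where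
  "liso A0 X Y \<longleftrightarrow> (\<exists>\<phi>. bij_betw \<phi> X Y \<and> (\<forall>x\<in>X. \<forall>y\<in>X. \<phi> (x + y) = \<phi> x + \<phi> y) \<and>
                        (\<forall>a\<in>A0. \<forall>x\<in>X. \<phi> (a * x) = a * \<phi> x))"

text \<open>isomorphism of left A0-modules X/Y \<cong> X'/Y', given by a map X \<rightarrow> X'/Y' (via representatives)\<close>
definition qiso :: "'a::ring_1 set \<Rightarrow> 'a set \<Rightarrow> 'a set \<Rightarrow> 'a set \<Rightarrow> 'a set \<Rightarrow> bool" where
  "qiso A0 X Y X' Y' \<longleftrightarrow> (\<exists>f. (\<forall>x\<in>X. f x \<in> X') \<and>
       (\<forall>x\<in>X. \<forall>y\<in>X. f (x + y) - (f x + f y) \<in> Y') \<and>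
       (\<forall>a\<in>A0. \<forall>x\<in>X. f (a * x) - a * f x \<in> Y') \<and>
       (\<forall>x\<in>X. f x \<in> Y' \<longleftrightarrow> x \<in> Y) \<and>
       (\<forall>x'\<in>X'. \<exists>x\<in>X. x' - f x \<in> Y'))"

text \<open>trace of the P(mu), mu not \<le> lambda, in P(lambda) = A0 e_lambda; Delta(lambda) = P(lambda)/trace\<close>
definition std_tr ::
  "('k::field \<Rightarrow> 'a::ring_1 \<Rightarrow> 'a) \<Rightarrow> 'a set \<Rightarrow> 'l set \<Rightarrow> ('l \<times> 'l) set \<Rightarrow> ('l \<Rightarrow> 'a) \<Rightarrow> 'l \<Rightarrow> 'a set" where
  "std_tr scale A0 \<Lambda> R e la = module.span scale
     {a * e \<mu> * b * e la | a b \<mu>. a \<in> A0 \<and> b \<in> A0 \<and> \<mu> \<in> \<Lambda> \<and> (\<mu>, la) \<notin> R}"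

text \<open>right version: e_mu A0 eps A0 with eps = sum of e_nu, nu not \<le> mu;
  nabla(mu) = D(e_mu A0 / e_mu A0 eps A0)\<close>
definition costd_tr ::
  "('k::field \<Rightarrow> 'a::ring_1 \<Rightarrow> 'a) \<Rightarrow> 'a set \<Rightarrow> 'l set \<Rightarrow> ('l \<times> 'l) set \<Rightarrow> ('l \<Rightarrow> 'a) \<Rightarrow> 'l \<Rightarrow> 'a set" where
  "costd_tr scale A0 \<Lambda> R e \<mu> = module.span scale
     {e \<mu> * a * e \<nu> * b | a b \<nu>. a \<in> A0 \<and> b \<in> A0 \<and> \<nu> \<in> \<Lambda> \<and> (\<nu>, \<mu>) \<notin> R}"

definition quasi_hereditary ::
  "('k::field \<Rightarrow> 'a::ring_1 \<Rightarrow> 'a) \<Rightarrow> (nat \<Rightarrow> 'a set) \<Rightarrow> 'l set \<Rightarrow> ('l \<times> 'l) set \<Rightarrow> ('l \<Rightarrow> 'a) \<Rightarrow> bool" where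
  "quasi_hereditary scale Agr \<Lambda> R e \<longleftrightarrow>
     (let A0 = Agr 0; P = (\<lambda>la. lideal A0 (e la)); U = std_tr scale A0 \<Lambda> R e in
     \<comment> \<open>weight poset\<close>
     partial_order_on \<Lambda> R \<and>
     \<comment> \<open>the weights label the simple A0-modules L(lambda) = top of P(lambda) = A0 e_lambda\<close>
     (\<forall>la\<in>\<Lambda>. prim_idem A0 (e la)) \<and>
     (\<forall>la\<in>\<Lambda>. \<forall>\<mu>\<in>\<Lambda>. la \<noteq> \<mu> \<longrightarrow> e la * e \<mu> = 0) \<and>
     (\<forall>la\<in>\<Lambda>. \<forall>\<mu>\<in>\<Lambda>. la \<noteq> \<mu> \<longrightarrow> \<not> liso A0 (P la) (P \<mu>)) \<and>
     (\<forall>f. prim_idem A0 f \<longrightarrow> (\<exists>la\<in>\<Lambda>. liso A0 (lideal A0 f) (P la))) \<and>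
     \<comment> \<open>End(Delta(lambda)) = k\<close>
     (\<forall>la\<in>\<Lambda>. \<forall>f. ((\<forall>x\<in>P la. f x \<in> P la) \<and>
          (\<forall>x\<in>P la. \<forall>y\<in>P la. f (x + y) - (f x + f y) \<in> U la) \<and>
          (\<forall>a\<in>A0. \<forall>x\<in>P la. f (a * x) - a * f x \<in> U la) \<and>
          (\<forall>x\<in>U la. f x \<in> U la))
        \<longrightarrow> (\<exists>c. \<forall>x\<in>P la. f x - scale c x \<in> U la)) \<and>
     \<comment> \<open>ker(P(lambda) \<rightarrow> Delta(lambda)) has a filtration by Delta(mu), mu > lambda\<close>
     (\<forall>la\<in>\<Lambda>. \<exists>(n::nat) K \<mu>. K 0 = {0} \<and> K n = U la \<and>
        (\<forall>i\<le>n. lsub A0 (K i)) \<and>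
        (\<forall>i<n. K i \<subseteq> K (Suc i) \<and> \<mu> i \<in> \<Lambda> \<and> (la, \<mu> i) \<in> R \<and> \<mu> i \<noteq> la \<and>
               qiso A0 (K (Suc i)) (K i) (P (\<mu> i)) (U (\<mu> i)))))"

definition Delta0 ::
  "('k::field \<Rightarrow> 'a::ring_1 \<Rightarrow> 'a) \<Rightarrow> (nat \<Rightarrow> 'a set) \<Rightarrow> 'l set \<Rightarrow> ('l \<times> 'l) set \<Rightarrow> ('l \<Rightarrow> 'a) \<Rightarrow> 'l
     \<Rightarrow> ('a, 'a set) gmod" where
  "Delta0 scale Agr \<Lambda> R e la =
     (let U = std_tr scale (Agr 0) \<Lambda> R e la;
          C = (\<lambda>x. (\<lambda>u. x + u) ` U) ` lideal (Agr 0) (e la) in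
     \<lparr> gcar = C,
       gzero = U,
       gadd = (\<lambda>X Y. {x + y | x y. x \<in> X \<and> y \<in> Y}),
       gact = (\<lambda>a X. {hcomp Agr 0 a * x + u | x u. x \<in> X \<and> u \<in> U}),
       gdeg = (\<lambda>i. if i = 0 then C else {U}) \<rparr>)"

definition Nabla0 ::
  "('k::field \<Rightarrow> 'a::ring_1 \<Rightarrow> 'a) \<Rightarrow> (nat \<Rightarrow> 'a set) \<Rightarrow> 'l set \<Rightarrow> ('l \<times> 'l) set \<Rightarrow> ('l \<Rightarrow> 'a) \<Rightarrow> 'l
     \<Rightarrow> ('a, 'a \<Rightarrow> 'k) gmod" where
  "Nabla0 scale Agr \<Lambda> R e \<mu> =
     (let V = costd_tr scale (Agr 0) \<Lambda> R e \<mu>;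
          C = {f :: 'a \<Rightarrow> 'k. (\<forall>x y. f (x + y) = f x + f y) \<and> (\<forall>c x. f (scale c x) = c * f x) \<and>
                 (\<forall>x. f x = f (e \<mu> * hcomp Agr 0 x)) \<and> (\<forall>x\<in>V. f x = 0)} in
     \<lparr> gcar = C,
       gzero = (\<lambda>_. 0),
       gadd = (\<lambda>f g x. f x + g x),
       gact = (\<lambda>a f x. f (x * hcomp Agr 0 a)),
       gdeg = (\<lambda>i. if i = 0 then C else {\<lambda>_. 0}) \<rparr>)"

end

theory Submission
  imports Defs
begin

(* Let B be the subalgebra generated by A_0 and A_1 and suppose B is not all of A.  Choose the
   least n with A_n not contained in B; then n >= 2, and B_n = B \<inter> A_n is an A_0-sub-bimodule
   of A_n in which all products of lower-degree components already lie.

   (1) Using that 1 is a sum of sandwiches a e_nu b (A_0 is built from primitive idempotents,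
       each isomorphic to some e_nu) and the standard filtrations of the traces U(la),
       we find weights la, mu and y \<in> A_n e_la such that e_mu y is not in the span of B_n,
       A_n U(la) and V(mu) A_n, where U(la) and V(mu) are the traces defining Delta(la) and
       nabla(mu).  The choice of mu is an induction over the up-closed sets of weights.
   (2) A linear functional theta separating e_mu y from that span is a cocycle: it yields a
       graded A-module E = nabla(mu)<n> \<times> Delta(la), where a \<in> A acts on Delta(la) through its
       degree-0 part and its degree-n part contributes via theta to the nabla(mu)<n> component.
       The extension 0 \<rightarrow> nabla(mu)<n> \<rightarrow> E \<rightarrow> Delta(la) \<rightarrow> 0 does not split, since y sends the
       image of the top e_la of Delta(la) to a nonzero element.
   (3) So ext^1(Delta(la), nabla(mu)<n>) \<noteq> 0 with n \<noteq> 1, contradicting 1-Q-Koszulity. *)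

section \<open>Positively graded algebras\<close>

locale graded_algebra =
  fixes scale :: "'k::field \<Rightarrow> 'a::ring_1 \<Rightarrow> 'a" and Agr :: "nat \<Rightarrow> 'a set"
  assumes graded: "fd_pos_graded_algebra scale Agr"
begin

sublocale vector_space scale
  using graded unfolding fd_pos_graded_algebra_def by blast

lemma scale_mult_left: "scale c (x * y) = scale c x * y"
  using graded unfolding fd_pos_graded_algebra_def by blast
lemma scale_mult_right: "scale c (x * y) = x * scale c y"
  using graded unfolding fd_pos_graded_algebra_def by blast
lemma fin_span: "\<exists>B. finite B \<and> span B = UNIV"
  using graded unfolding fd_pos_graded_algebra_def by blast
lemma sub_Agr: "subspace (Agr i)"
  using graded unfolding fd_pos_graded_algebra_def by blast
lemma mult_Agr: "x \<in> Agr i \<Longrightarrow> y \<in> Agr j \<Longrightarrow> x * y \<in> Agr (i + j)"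
  using graded unfolding fd_pos_graded_algebra_def by blast
lemma one_Agr: "1 \<in> Agr 0"
  using graded unfolding fd_pos_graded_algebra_def by blast
lemma uniq_dec: "\<exists>!c. graded_decomp Agr x c"
  using graded unfolding fd_pos_graded_algebra_def by blast

lemma zero_Agr[simp]: "0 \<in> Agr i" using sub_Agr subspace_0 by blast
lemma add_Agr: "x \<in> Agr i \<Longrightarrow> y \<in> Agr i \<Longrightarrow> x + y \<in> Agr i" using sub_Agr subspace_add by blast
lemma neg_Agr: "x \<in> Agr i \<Longrightarrow> - x \<in> Agr i" using sub_Agr subspace_neg by blast
lemma scale_Agr: "x \<in> Agr i \<Longrightarrow> scale c x \<in> Agr i" using sub_Agr subspace_scale by blast
lemma sum_Agr: "(\<And>j. j \<in> S \<Longrightarrow> f j \<in> Agr i) \<Longrightarrow> sum f S \<in> Agr i" using sub_Agr subspace_sum by blast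

lemma scale_one_mult: "scale c 1 * x = scale c x"
  by (metis mult_1 scale_mult_left)
lemma mult_scale_one: "x * scale c 1 = scale c x"
  by (metis mult_1_right scale_mult_right)

abbreviation A0 where "A0 \<equiv> Agr 0"

lemma A0_mult: "a \<in> A0 \<Longrightarrow> b \<in> A0 \<Longrightarrow> a * b \<in> A0"
  using mult_Agr[of a 0 b 0] by simp
lemma mult_A0_left: "a \<in> A0 \<Longrightarrow> x \<in> Agr n \<Longrightarrow> a * x \<in> Agr n"
  using mult_Agr[of a 0 x n] by simp
lemma mult_A0_right: "x \<in> Agr n \<Longrightarrow> a \<in> A0 \<Longrightarrow> x * a \<in> Agr n"
  using mult_Agr[of x n a 0] by simp

abbreviation hc where "hc i x \<equiv> hcomp Agr i x"

lemma hcomp_eq: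
  assumes "\<And>i. c i \<in> Agr i" "finite S" "\<And>i. i \<notin> S \<Longrightarrow> c i = 0" "x = sum c S"
  shows "hc i x = c i"
proof -
  have sub: "{i. c i \<noteq> 0} \<subseteq> S" using assms(3) by blast
  have gd: "graded_decomp Agr x c"
    unfolding graded_decomp_def using assms sub finite_subset[OF sub assms(2)]
    by (auto intro!: sum.mono_neutral_right)
  have "(THE c. graded_decomp Agr x c) = c"
    using uniq_dec[of x] gd by (metis the1_equality)
  then show ?thesis by (simp add: hcomp_def)
qed

lemma hcomp_decomp: "graded_decomp Agr x (\<lambda>i. hc i x)"
proof -
  have "graded_decomp Agr x (THE c. graded_decomp Agr x c)"
    using uniq_dec[of x] by (rule theI')
  then show ?thesis by (simp add: hcomp_def[abs_def])
qed

lemma hcomp_in[simp]: "hc i x \<in> Agr i"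
  using hcomp_decomp[of x] by (simp add: graded_decomp_def)

lemma hcomp_bound: "\<exists>N. \<forall>i\<ge>N. hc i x = 0"
proof -
  have "finite {i. hc i x \<noteq> 0}" using hcomp_decomp[of x] by (simp add: graded_decomp_def)
  then obtain N where N: "{i. hc i x \<noteq> 0} \<subseteq> {..<N}"
    using finite_nat_bounded by blast
  then have "\<forall>i\<ge>N. hc i x = 0" by (auto simp: subset_eq)
  then show ?thesis by blast
qed

lemma hcomp_sum_lt: assumes "\<forall>i\<ge>N. hc i x = 0" shows "x = (\<Sum>i<N. hc i x)"
proof -
  have "x = (\<Sum>i\<in>{i. hc i x \<noteq> 0}. hc i x)"
    using hcomp_decomp[of x] by (simp add: graded_decomp_def)
  also have "\<dots> = (\<Sum>i<N. hc i x)"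
    using assms by (intro sum.mono_neutral_left) (auto simp: not_less[symmetric])
  finally show ?thesis .
qed

lemma hcomp_homog: assumes "x \<in> Agr j" shows "hc i x = (if i = j then x else 0)"
  by (rule hcomp_eq[where S="{j}"]) (use assms in auto)

lemma hcomp_add: "hc i (x + y) = hc i x + hc i y"
proof -
  obtain N1 where N1: "\<forall>i\<ge>N1. hc i x = 0" using hcomp_bound by blast
  obtain N2 where N2: "\<forall>i\<ge>N2. hc i y = 0" using hcomp_bound by blast
  let ?N = "max N1 N2"
  show ?thesis
  proof (rule hcomp_eq[where S="{..<?N}"])
    show "hc i x + hc i y \<in> Agr i" for i by (simp add: add_Agr)
    show "i \<notin> {..<?N} \<Longrightarrow> hc i x + hc i y = 0" for i using N1 N2 by auto
    have "x = (\<Sum>i<?N. hc i x)" "y = (\<Sum>i<?N. hc i y)"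
      using N1 N2 by (auto intro!: hcomp_sum_lt)
    then show "x + y = (\<Sum>i<?N. hc i x + hc i y)" by (simp add: sum.distrib)
  qed simp
qed

lemma hcomp_scale: "hc i (scale c x) = scale c (hc i x)"
proof -
  obtain N where N: "\<forall>i\<ge>N. hc i x = 0" using hcomp_bound by blast
  show ?thesis
  proof (rule hcomp_eq[where S="{..<N}"])
    show "scale c (hc i x) \<in> Agr i" for i by (simp add: scale_Agr)
    show "i \<notin> {..<N} \<Longrightarrow> scale c (hc i x) = 0" for i using N by auto
    have "scale c x = scale c (\<Sum>i<N. hc i x)" using hcomp_sum_lt[OF N] by simp
    then show "scale c x = (\<Sum>i<N. scale c (hc i x))" by (simp only: scale_sum_right)
  qed simp
qed

lemma hcomp_mult: "hc k (x * y) = (\<Sum>i\<le>k. hc i x * hc (k - i) y)"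
proof -
  obtain N1 where N1: "\<forall>i\<ge>N1. hc i x = 0" using hcomp_bound by blast
  obtain N2 where N2: "\<forall>i\<ge>N2. hc i y = 0" using hcomp_bound by blast
  define N where "N = max N1 N2"
  have Nx: "\<forall>i\<ge>N. hc i x = 0" and Ny: "\<forall>i\<ge>N. hc i y = 0" using N1 N2 by (auto simp: N_def)
  let ?c = "\<lambda>k. (\<Sum>i\<le>k. hc i x * hc (k - i) y)"
  show ?thesis
  proof (rule hcomp_eq[where S="{..<N+N}"])
    show "?c i \<in> Agr i" for i
    proof (rule sum_Agr)
      fix j assume "j \<in> {..i}"
      then show "hc j x * hc (i - j) y \<in> Agr i"
        using mult_Agr[OF hcomp_in hcomp_in, of j x "i - j" y] by simp
    qed
    show "?c k = 0" if "k \<notin> {..<N+N}" for k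
    proof (rule sum.neutral, intro ballI)
      fix i assume "i \<in> {..k}"
      show "hc i x * hc (k - i) y = 0"
      proof (cases "i \<ge> N")
        case True then show ?thesis using Nx by simp
      next
        case False then have "k - i \<ge> N" using that by auto
        then show ?thesis using Ny by simp
      qed
    qed
    have "x * y = (\<Sum>i<N. hc i x) * (\<Sum>j<N. hc j y)"
      using Nx Ny hcomp_sum_lt by metis
    also have "\<dots> = (\<Sum>(i,j)\<in>{..<N} \<times> {..<N}. hc i x * hc j y)"
      by (simp add: sum_product sum.cartesian_product)
    also have "\<dots> = (\<Sum>(i,j)\<in>{(i,j). i + j < N + N}. hc i x * hc j y)"
    proof (rule sum.mono_neutral_left)
      show "finite {(i, j). i + j < N + N}"
        by (rule finite_subset[of _ "{..<N+N} \<times> {..<N+N}"]) auto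
      show "\<forall>p\<in>{(i, j). i + j < N + N} - {..<N} \<times> {..<N}. (case p of (i,j) \<Rightarrow> hc i x * hc j y) = 0"
        using Nx Ny by (auto simp: not_less[symmetric])
    qed auto
    also have "\<dots> = (\<Sum>k<N+N. ?c k)" by (rule sum.triangle_reindex)
    finally show "x * y = (\<Sum>k<N+N. ?c k)" .
  qed simp
qed

lemma hc0_A0: "x \<in> A0 \<Longrightarrow> hc 0 x = x" by (simp add: hcomp_homog)

text \<open>Taking the degree-0 component is multiplicative (the grading is nonnegative).\<close>
lemma hc0_mult: "hc 0 (x * y) = hc 0 x * hc 0 y"
  by (simp add: hcomp_mult)

text \<open>A is finite-dimensional, so dimension is strictly monotone on spans.\<close>
lemma dim_psubset_fd: assumes "span S \<subset> span T" shows "dim S < dim T"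
proof -
  obtain B where B: "finite B" "span B = UNIV" using fin_span by blast
  obtain Bs where Bs: "Bs \<subseteq> B" "independent Bs" "B \<subseteq> span Bs"
    using maximal_independent_subset[of B] by blast
  have "span Bs = UNIV"
    using B(2) Bs(3) span_mono[OF Bs(3)] span_span by (metis top.extremum_uniqueI)
  then interpret FD: finite_dimensional_vector_space scale Bs
    using Bs B(1) finite_subset by unfold_locales auto
  show ?thesis using assms by (rule FD.dim_psubset)
qed

lemma span_bimult:
  assumes "x \<in> span S" "subspace W" "\<And>s. s \<in> S \<Longrightarrow> a * s * w \<in> W"
  shows "a * x * w \<in> W"
  using assms(1)
proof (induct x rule: span_induct_alt)
  case base
  then show ?case using assms(2) by (simp add: subspace_0)
next
  case (step c s y)
  have "a * (scale c s + y) * w = scale c (a * s * w) + a * y * w"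
    by (simp add: distrib_left distrib_right) (metis scale_mult_left scale_mult_right)
  then show ?case using step assms by (simp add: subspace_add subspace_scale)
qed

lemma span_mult_right:
  assumes "x \<in> span S" "subspace W" "\<And>s. s \<in> S \<Longrightarrow> s * w \<in> W"
  shows "x * w \<in> W"
  using span_bimult[OF assms(1,2), of 1 w] assms(3) by simp

lemma span_into:
  assumes "x \<in> span S" "subspace W" "S \<subseteq> W" shows "x \<in> W"
  using span_minimal assms by blast

lemma lideal_sub: "f \<in> A0 \<Longrightarrow> subspace (lideal A0 f)"
  unfolding subspace_def lideal_def
proof (intro conjI allI ballI)
  show "0 \<in> {a * f |a. a \<in> A0}" by (rule CollectI, rule exI[of _ 0]) simp
next
  fix x y assume "x \<in> {a * f |a. a \<in> A0}" "y \<in> {a * f |a. a \<in> A0}"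
  then obtain a b where "x = a * f" "y = b * f" "a \<in> A0" "b \<in> A0" by blast
  then show "x + y \<in> {a * f |a. a \<in> A0}"
    by (intro CollectI exI[of _ "a + b"]) (simp add: distrib_right add_Agr)
next
  fix c x assume "x \<in> {a * f |a. a \<in> A0}"
  then obtain a where "x = a * f" "a \<in> A0" by blast
  then show "scale c x \<in> {a * f |a. a \<in> A0}"
    by (intro CollectI exI[of _ "scale c a"]) (metis scale_mult_left scale_Agr)
qed

end

section \<open>The quasi-hereditary structure of A_0\<close>

locale qh_algebra = graded_algebra scale Agr for scale :: "'k::field \<Rightarrow> 'a::ring_1 \<Rightarrow> 'a" and Agr +
  fixes \<Lambda> :: "'l set" and R :: "('l \<times> 'l) set" and e :: "'l \<Rightarrow> 'a"
  assumes qh: "quasi_hereditary scale Agr \<Lambda> R e"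
begin

text \<open>P(la) = A_0 e_la; U(la) is the kernel of P(la) \<rightarrow> Delta(la); V(mu) is the trace
  e_mu A_0 eps A_0 with nabla(mu) = D(e_mu A_0 / V(mu)).\<close>
abbreviation P where "P la \<equiv> lideal A0 (e la)"
abbreviation U where "U la \<equiv> std_tr scale A0 \<Lambda> R e la"
abbreviation V where "V mu \<equiv> costd_tr scale A0 \<Lambda> R e mu"

lemmas qh_unfolded = qh[unfolded quasi_hereditary_def Let_def]

lemma po: "partial_order_on \<Lambda> R" by (rule qh_unfolded[THEN conjunct1])
lemma e_prim: "la \<in> \<Lambda> \<Longrightarrow> prim_idem A0 (e la)"
  by (rule qh_unfolded[THEN conjunct2, THEN conjunct1, rule_format])
lemma e_orth: "la \<in> \<Lambda> \<Longrightarrow> mu \<in> \<Lambda> \<Longrightarrow> la \<noteq> mu \<Longrightarrow> e la * e mu = 0"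
  by (rule qh_unfolded[THEN conjunct2, THEN conjunct2, THEN conjunct1, rule_format])
lemma all_prim: "prim_idem A0 f \<Longrightarrow> \<exists>la\<in>\<Lambda>. liso A0 (lideal A0 f) (P la)"
  by (rule qh_unfolded[THEN conjunct2, THEN conjunct2, THEN conjunct2, THEN conjunct2, THEN conjunct1,
        rule_format])
lemma filt: "la \<in> \<Lambda> \<Longrightarrow> \<exists>(m::nat) K mu. K 0 = {0} \<and> K m = U la \<and>
        (\<forall>i\<le>m. lsub A0 (K i)) \<and>
        (\<forall>i<m. K i \<subseteq> K (Suc i) \<and> mu i \<in> \<Lambda> \<and> (la, mu i) \<in> R \<and> mu i \<noteq> la \<and>
               qiso A0 (K (Suc i)) (K i) (P (mu i)) (U (mu i)))"
  by (rule qh_unfolded[THEN conjunct2, THEN conjunct2, THEN conjunct2, THEN conjunct2, THEN conjunct2,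
        THEN conjunct2, rule_format])

lemma e_in: "la \<in> \<Lambda> \<Longrightarrow> e la \<in> A0" using e_prim unfolding prim_idem_def by blast
lemma e_idem: "la \<in> \<Lambda> \<Longrightarrow> e la * e la = e la" using e_prim unfolding prim_idem_def by blast
lemma e_nz: "la \<in> \<Lambda> \<Longrightarrow> e la \<noteq> 0" using e_prim unfolding prim_idem_def by blast

lemma R_refl: "la \<in> \<Lambda> \<Longrightarrow> (la, la) \<in> R"
  using po unfolding partial_order_on_def preorder_on_def refl_on_def by blast
lemma R_trans: "(a, b) \<in> R \<Longrightarrow> (b, c) \<in> R \<Longrightarrow> (a, c) \<in> R"
  using po unfolding partial_order_on_def preorder_on_def trans_def by blast
lemma R_antisym: "(a, b) \<in> R \<Longrightarrow> (b, a) \<in> R \<Longrightarrow> a = b"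
  using po unfolding partial_order_on_def antisym_def by blast

lemma U_sub: "subspace (U la)" unfolding std_tr_def by simp
lemma V_sub: "subspace (V la)" unfolding costd_tr_def by simp

lemma U0: "0 \<in> U la" using U_sub subspace_0 by blast
lemma U_add: "u \<in> U la \<Longrightarrow> v \<in> U la \<Longrightarrow> u + v \<in> U la" using U_sub subspace_add by blast
lemma U_diff: "u \<in> U la \<Longrightarrow> v \<in> U la \<Longrightarrow> u - v \<in> U la" using U_sub subspace_diff by blast

lemma U_gen: "a \<in> A0 \<Longrightarrow> b \<in> A0 \<Longrightarrow> mu \<in> \<Lambda> \<Longrightarrow> (mu, la) \<notin> R \<Longrightarrow> a * e mu * b * e la \<in> U la"
  unfolding std_tr_def by (rule span_base) blast

lemma V_gen: "a \<in> A0 \<Longrightarrow> b \<in> A0 \<Longrightarrow> nu \<in> \<Lambda> \<Longrightarrow> (nu, mu) \<notin> R \<Longrightarrow> e mu * a * e nu * b \<in> V mu"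
  unfolding costd_tr_def by (rule span_base) blast

lemma U_sandwich: "nu \<in> \<Lambda> \<Longrightarrow> (nu, la) \<notin> R \<Longrightarrow> a \<in> A0 \<Longrightarrow> e nu * a * e la \<in> U la"
  using U_gen[of 1 a nu la] one_Agr by simp

lemma U_mult_left: assumes "a \<in> A0" "u \<in> U la" shows "a * u \<in> U la"
proof -
  have "a * u * 1 \<in> U la"
  proof (rule span_bimult[OF assms(2)[unfolded std_tr_def] U_sub])
    fix s assume "s \<in> {a * e mu * b * e la |a b mu. a \<in> A0 \<and> b \<in> A0 \<and> mu \<in> \<Lambda> \<and> (mu, la) \<notin> R}"
    then obtain a' b mu where s: "s = a' * e mu * b * e la" "a' \<in> A0" "b \<in> A0" "mu \<in> \<Lambda>" "(mu, la) \<notin> R" by blast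
    have "a * s * 1 = (a * a') * e mu * b * e la" by (simp add: s mult.assoc)
    then show "a * s * 1 \<in> U la" using U_gen[OF A0_mult[OF assms(1) s(2)] s(3-5)] by simp
  qed
  then show ?thesis by simp
qed

lemma U_in_A0: assumes "u \<in> U la" "la \<in> \<Lambda>" shows "u \<in> A0"
proof (rule span_into[OF assms(1)[unfolded std_tr_def] sub_Agr])
  show "{a * e mu * b * e la |a b mu. a \<in> A0 \<and> b \<in> A0 \<and> mu \<in> \<Lambda> \<and> (mu, la) \<notin> R} \<subseteq> A0"
  proof (intro subsetI)
    fix s assume "s \<in> {a * e mu * b * e la |a b mu. a \<in> A0 \<and> b \<in> A0 \<and> mu \<in> \<Lambda> \<and> (mu, la) \<notin> R}"
    then obtain a b mu where "s = a * e mu * b * e la" "a \<in> A0" "b \<in> A0" "mu \<in> \<Lambda>" by blast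
    then show "s \<in> A0" using A0_mult e_in assms(2) by metis
  qed
qed

lemma V_in_A0: assumes "v \<in> V mu" "mu \<in> \<Lambda>" shows "v \<in> A0"
proof (rule span_into[OF assms(1)[unfolded costd_tr_def] sub_Agr])
  show "{e mu * a * e nu * b |a b nu. a \<in> A0 \<and> b \<in> A0 \<and> nu \<in> \<Lambda> \<and> (nu, mu) \<notin> R} \<subseteq> A0"
  proof (intro subsetI)
    fix s assume "s \<in> {e mu * a * e nu * b |a b nu. a \<in> A0 \<and> b \<in> A0 \<and> nu \<in> \<Lambda> \<and> (nu, mu) \<notin> R}"
    then obtain a b nu where "s = e mu * a * e nu * b" "a \<in> A0" "b \<in> A0" "nu \<in> \<Lambda>" by blast
    then show "s \<in> A0" using A0_mult e_in assms(2) by metis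
  qed
qed

lemma U_idem: assumes "u \<in> U la" "la \<in> \<Lambda>" shows "u * e la = u"
proof -
  have sub: "subspace {x. x * e la = x}"
    unfolding subspace_def by (auto simp: distrib_right scale_mult_left[symmetric])
  have "u \<in> {x. x * e la = x}"
  proof (rule span_into[OF assms(1)[unfolded std_tr_def] sub])
    show "{a * e mu * b * e la |a b mu. a \<in> A0 \<and> b \<in> A0 \<and> mu \<in> \<Lambda> \<and> (mu, la) \<notin> R} \<subseteq> {x. x * e la = x}"
      using e_idem[OF assms(2)] by (auto simp: mult.assoc)
  qed
  then show ?thesis by simp
qed

lemma V_idem: assumes "v \<in> V mu" "mu \<in> \<Lambda>" shows "e mu * v = v"
proof -
  have sub: "subspace {x. e mu * x = x}"
    unfolding subspace_def by (auto simp: distrib_left scale_mult_right[symmetric])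
  have "v \<in> {x. e mu * x = x}"
  proof (rule span_into[OF assms(1)[unfolded costd_tr_def] sub])
    show "{e mu * a * e nu * b |a b nu. a \<in> A0 \<and> b \<in> A0 \<and> nu \<in> \<Lambda> \<and> (nu, mu) \<notin> R} \<subseteq> {x. e mu * x = x}"
      using e_idem[OF assms(2)] by (auto simp: mult.assoc[symmetric])
  qed
  then show ?thesis by simp
qed

lemma V_mult_right: assumes "a \<in> A0" "v \<in> V mu" shows "v * a \<in> V mu"
proof -
  have "1 * v * a \<in> V mu"
  proof (rule span_bimult[OF assms(2)[unfolded costd_tr_def] V_sub])
    fix s assume "s \<in> {e mu * a * e nu * b |a b nu. a \<in> A0 \<and> b \<in> A0 \<and> nu \<in> \<Lambda> \<and> (nu, mu) \<notin> R}"
    then obtain a' b nu where s: "s = e mu * a' * e nu * b" "a' \<in> A0" "b \<in> A0" "nu \<in> \<Lambda>" "(nu, mu) \<notin> R" by blast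
    have "1 * s * a = e mu * a' * e nu * (b * a)" by (simp add: s mult.assoc)
    then show "1 * s * a \<in> V mu" using V_gen[OF s(2) A0_mult[OF s(3) assms(1)] s(4-5)] by simp
  qed
  then show ?thesis by simp
qed

lemma P_A0: "la \<in> \<Lambda> \<Longrightarrow> x \<in> P la \<Longrightarrow> x \<in> A0"
  unfolding lideal_def using A0_mult e_in by blast

lemma P_sub: "la \<in> \<Lambda> \<Longrightarrow> subspace (P la)" using lideal_sub e_in by blast

lemma P_mult: assumes "c \<in> A0" "x \<in> P la" shows "c * x \<in> P la"
proof -
  obtain b where b: "b \<in> A0" "x = b * e la" using assms(2) unfolding lideal_def by blast
  have "c * x = (c * b) * e la" using b(2) by (simp add: mult.assoc)
  then show ?thesis unfolding lideal_def using A0_mult[OF assms(1) b(1)] by blast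
qed

lemma e_in_P: assumes "la \<in> \<Lambda>" shows "e la \<in> P la"
  unfolding lideal_def using e_in[OF assms] e_idem[OF assms] by (metis (mono_tags, lifting) mem_Collect_eq)

text \<open>A layer K'/K \<cong> Delta(s) of the filtration is generated modulo K by one element kappa \<in> e_s K'
  (the preimage of the top e_s), and U(s) kappa \<subseteq> K.\<close>
lemma filtration_layer_generator:
  assumes K': "lsub A0 K'" and q: "qiso A0 K' K (P s) (U s)" and s: "s \<in> \<Lambda>"
  shows "\<exists>\<kappa>\<in>K'. e s * \<kappa> = \<kappa> \<and> (\<forall>k\<in>K'. \<exists>b\<in>A0. k - b * \<kappa> \<in> K) \<and> (\<forall>u\<in>U s. u * \<kappa> \<in> K)"
proof -
  obtain f where f1: "\<forall>x\<in>K'. f x \<in> P s"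
    and f2: "\<forall>x\<in>K'. \<forall>y\<in>K'. f (x + y) - (f x + f y) \<in> U s"
    and f3: "\<forall>a\<in>A0. \<forall>x\<in>K'. f (a * x) - a * f x \<in> U s"
    and f4: "\<forall>x\<in>K'. f x \<in> U s \<longleftrightarrow> x \<in> K"
    and f5: "\<forall>x'\<in>P s. \<exists>x\<in>K'. x' - f x \<in> U s"
    using q unfolding qiso_def by blast
  have es: "e s \<in> A0" "e s * e s = e s" using e_in e_idem s by auto
  obtain k0 where k0: "k0 \<in> K'" "e s - f k0 \<in> U s" using f5 e_in_P[OF s] by blast
  define \<kappa> where "\<kappa> = e s * k0"
  have kK: "\<kappa> \<in> K'" unfolding \<kappa>_def using K' es(1) k0(1) unfolding lsub_def by blast
  have ek: "e s * \<kappa> = \<kappa>" unfolding \<kappa>_def by (simp add: mult.assoc[symmetric] es(2))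
  text \<open>kappa maps to the top e_s of Delta(s).\<close>
  have delta: "f \<kappa> - e s \<in> U s"
  proof -
    have t1: "f \<kappa> - e s * f k0 \<in> U s" using f3 es(1) k0(1) unfolding \<kappa>_def by blast
    have t2: "e s * (e s - f k0) \<in> U s" using U_mult_left[OF es(1) k0(2)] .
    have "e s * (e s - f k0) = e s - e s * f k0" by (simp add: right_diff_distrib es(2))
    then have "f \<kappa> - e s = (f \<kappa> - e s * f k0) - (e s * (e s - f k0))" by simp
    then show ?thesis using U_diff[OF t1 t2] by metis
  qed
  have generates: "\<forall>k\<in>K'. \<exists>b\<in>A0. k - b * \<kappa> \<in> K"
  proof
    fix k assume kK': "k \<in> K'"
    obtain b where b: "b \<in> A0" "f k = b * e s" using f1 kK' unfolding lideal_def by blast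
    have nb: "- b \<in> A0" using b(1) neg_Agr by blast
    have bk: "(- b) * \<kappa> \<in> K'" using K' nb kK unfolding lsub_def by blast
    define k' where "k' = k + (- b) * \<kappa>"
    have k'K': "k' \<in> K'" unfolding k'_def using K' kK' bk unfolding lsub_def by blast
    have g1: "f k' - (f k + f ((- b) * \<kappa>)) \<in> U s" using f2 kK' bk unfolding k'_def by blast
    have g2: "f ((- b) * \<kappa>) - (- b) * f \<kappa> \<in> U s" using f3 nb kK by blast
    have g3: "(- b) * (f \<kappa> - e s) \<in> U s" using U_mult_left[OF nb delta] .
    have eq: "f k' = (f k' - (f k + f ((- b) * \<kappa>))) + (f ((- b) * \<kappa>) - (- b) * f \<kappa>) + (- b) * (f \<kappa> - e s)"
      by (simp add: b(2) algebra_simps)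
    have "f k' \<in> U s" by (subst eq, rule U_add[OF U_add[OF g1 g2] g3])
    then have "k' \<in> K" using f4 k'K' by blast
    then show "\<exists>b\<in>A0. k - b * \<kappa> \<in> K" using b(1) unfolding k'_def by auto
  qed
  have annihilated: "\<forall>u\<in>U s. u * \<kappa> \<in> K"
  proof
    fix u assume u: "u \<in> U s"
    have uA: "u \<in> A0" using U_in_A0[OF u s] .
    have ukK': "u * \<kappa> \<in> K'" using K' uA kK unfolding lsub_def by blast
    have h1: "f (u * \<kappa>) - u * f \<kappa> \<in> U s" using f3 uA kK by blast
    have h2: "u * (f \<kappa> - e s) \<in> U s" using U_mult_left[OF uA delta] .
    have eq: "f (u * \<kappa>) = (f (u * \<kappa>) - u * f \<kappa>) + u * (f \<kappa> - e s) + u"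
      using U_idem[OF u s] by (simp add: algebra_simps)
    have "f (u * \<kappa>) \<in> U s" by (subst eq, rule U_add[OF U_add[OF h1 h2] u])
    then show "u * \<kappa> \<in> K" using f4 ukK' by blast
  qed
  show ?thesis using kK ek generates annihilated by blast
qed

lemma trace_induct:
  assumes la: "la \<in> \<Lambda>" and T0: "0 \<in> T" and Tadd: "\<And>x y. x \<in> T \<Longrightarrow> y \<in> T \<Longrightarrow> x + y \<in> T"
    and layer: "\<And>s \<kappa> b. s \<in> \<Lambda> \<Longrightarrow> (la, s) \<in> R \<Longrightarrow> \<kappa> \<in> A0 \<Longrightarrow> e s * \<kappa> = \<kappa> \<Longrightarrow> b \<in> A0 \<Longrightarrow>
                  (\<forall>u\<in>U s. u * \<kappa> \<in> T) \<Longrightarrow> b * \<kappa> \<in> T"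
  shows "U la \<subseteq> T"
proof -
  obtain m K mu where K0: "K 0 = {0}" and Km: "K m = U la" and Kl: "\<forall>i\<le>m. lsub A0 (K i)"
    and Ks: "\<forall>i<m. K i \<subseteq> K (Suc i) \<and> mu i \<in> \<Lambda> \<and> (la, mu i) \<in> R \<and> mu i \<noteq> la \<and>
               qiso A0 (K (Suc i)) (K i) (P (mu i)) (U (mu i))"
    using filt[OF la] by blast
  have "i \<le> m \<Longrightarrow> K i \<subseteq> T" for i
  proof (induct i)
    case 0
    then show ?case using K0 T0 by simp
  next
    case (Suc i)
    then have IH: "K i \<subseteq> T" by simp
    have s: "mu i \<in> \<Lambda>" "(la, mu i) \<in> R" "qiso A0 (K (Suc i)) (K i) (P (mu i)) (U (mu i))"
      using Ks Suc(2) by auto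
    have lK: "lsub A0 (K (Suc i))" using Kl Suc(2) by blast
    obtain \<kappa> where kK: "\<kappa> \<in> K (Suc i)" and ek: "e (mu i) * \<kappa> = \<kappa>"
      and dec: "\<forall>k\<in>K (Suc i). \<exists>b\<in>A0. k - b * \<kappa> \<in> K i" and uk: "\<forall>u\<in>U (mu i). u * \<kappa> \<in> K i"
      using filtration_layer_generator[OF lK s(3) s(1)] by blast
    have kA: "\<kappa> \<in> A0" using lK kK unfolding lsub_def by blast
    show ?case
    proof
      fix k assume "k \<in> K (Suc i)"
      then obtain b where b: "b \<in> A0" "k - b * \<kappa> \<in> K i" using dec by blast
      have "b * \<kappa> \<in> T" using layer[OF s(1,2) kA ek b(1)] uk IH by blast
      then have "(k - b * \<kappa>) + b * \<kappa> \<in> T" using Tadd IH b(2) by blast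
      then show "k \<in> T" by simp
    qed
  qed
  then show ?thesis using Km by blast
qed

definition common_upper_span where
  "common_upper_span nu rho =
     span {c * e s * d | c d s. c \<in> A0 \<and> d \<in> A0 \<and> s \<in> \<Lambda> \<and> (nu, s) \<in> R \<and> (rho, s) \<in> R}"

lemma common_upper_span_gen:
  "c \<in> A0 \<Longrightarrow> d \<in> A0 \<Longrightarrow> s \<in> \<Lambda> \<Longrightarrow> (nu, s) \<in> R \<Longrightarrow> (rho, s) \<in> R \<Longrightarrow> c * e s * d \<in> common_upper_span nu rho"
  unfolding common_upper_span_def by (rule span_base) blast

text \<open>If nu \<le> rho take s = rho; otherwise e_nu A_0 e_rho \<subseteq> U(rho), and the layers of U(rho)
  have weights s > rho.\<close>
lemma idempotent_sandwich_factors: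
  assumes nu: "nu \<in> \<Lambda>" and rho: "rho \<in> \<Lambda>" and a: "a \<in> A0"
  shows "e nu * a * e rho \<in> common_upper_span nu rho"
proof (cases "(nu, rho) \<in> R")
  case True
  then show ?thesis
    using common_upper_span_gen[OF A0_mult[OF e_in[OF nu] a] one_Agr rho True R_refl[OF rho]] by simp
next
  case False
  let ?T = "{k. e nu * k \<in> common_upper_span nu rho}"
  have sub: "subspace (common_upper_span nu rho)" unfolding common_upper_span_def by simp
  have en: "e nu * e nu = e nu" "e nu \<in> A0" using e_idem[OF nu] e_in[OF nu] by auto
  have "U rho \<subseteq> ?T"
  proof (rule trace_induct[OF rho])
    show "0 \<in> ?T" using sub subspace_0 by auto
    show "x \<in> ?T \<Longrightarrow> y \<in> ?T \<Longrightarrow> x + y \<in> ?T" for x y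
      using sub subspace_add by (fastforce simp: distrib_left)
  next
    fix s \<kappa> b assume s: "s \<in> \<Lambda>" "(rho, s) \<in> R" and kA: "\<kappa> \<in> A0" and ek: "e s * \<kappa> = \<kappa>"
      and b: "b \<in> A0" and uk: "\<forall>u\<in>U s. u * \<kappa> \<in> ?T"
    have eq: "e nu * (b * \<kappa>) = e nu * b * e s * \<kappa>" using ek by (simp add: mult.assoc)
    show "b * \<kappa> \<in> ?T"
    proof (cases "(nu, s) \<in> R")
      case True
      then show ?thesis
        using common_upper_span_gen[OF A0_mult[OF en(2) b] kA s(1) True s(2)] eq by simp
    next
      case False
      have "e nu * (e nu * b * e s * \<kappa>) \<in> common_upper_span nu rho"
        using uk U_sandwich[OF nu False b] by blast
      then show ?thesis using eq by (simp add: mult.assoc[symmetric] en(1))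
    qed
  qed
  then have "e nu * (e nu * a * e rho) \<in> common_upper_span nu rho"
    using U_sandwich[OF nu False a] by blast
  then show ?thesis by (simp add: mult.assoc[symmetric] en(1))
qed

text \<open>The e_la are nonzero orthogonal idempotents, hence linearly independent.\<close>
lemma Lambda_finite: "finite \<Lambda>"
proof -
  obtain B where B: "finite B" "span B = UNIV" using fin_span by blast
  have e_inj: "inj_on e \<Lambda>"
  proof (rule inj_onI)
    fix a b assume ab: "a \<in> \<Lambda>" "b \<in> \<Lambda>" "e a = e b"
    show "a = b"
    proof (rule ccontr)
      assume "a \<noteq> b"
      then have "e a * e b = 0" using e_orth ab by blast
      then show False using e_idem[OF ab(1)] e_nz[OF ab(1)] ab(3) by simp
    qed
  qed
  have ind: "independent (e ` \<Lambda>)"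
    unfolding dependent_def
  proof
    assume "\<exists>a\<in>e ` \<Lambda>. a \<in> span (e ` \<Lambda> - {a})"
    then obtain nu where nu: "nu \<in> \<Lambda>" "e nu \<in> span (e ` \<Lambda> - {e nu})" by blast
    have "e nu * e nu * 1 \<in> {0}"
    proof (rule span_bimult[OF nu(2)])
      show "subspace {0}" unfolding subspace_def by simp
      fix s assume "s \<in> e ` \<Lambda> - {e nu}"
      then obtain t where "t \<in> \<Lambda>" "s = e t" "t \<noteq> nu" by blast
      then show "e nu * s * 1 \<in> {0}" using e_orth[OF nu(1)] by simp
    qed
    then show False using e_idem[OF nu(1)] e_nz[OF nu(1)] by simp
  qed
  have "finite (e ` \<Lambda>)" using independent_span_bound[OF B(1) ind] B(2) by blast
  then show ?thesis using finite_imageD e_inj by blast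
qed

definition idem_span where
  "idem_span = span {a * e nu * b | a b nu. a \<in> A0 \<and> b \<in> A0 \<and> nu \<in> \<Lambda>}"

lemma idem_span_gen: "a \<in> A0 \<Longrightarrow> b \<in> A0 \<Longrightarrow> nu \<in> \<Lambda> \<Longrightarrow> a * e nu * b \<in> idem_span"
  unfolding idem_span_def by (rule span_base) blast

text \<open>A primitive idempotent f has A_0 f \<cong> P(la) for some la, so f = p e_la q lies in the ideal.\<close>
lemma primitive_in_idem_span: assumes f: "prim_idem A0 f" shows "f \<in> idem_span"
proof -
  have fA: "f \<in> A0" "f * f = f" using f unfolding prim_idem_def by auto
  obtain la where la: "la \<in> \<Lambda>" and li: "liso A0 (lideal A0 f) (P la)" using all_prim[OF f] by blast
  obtain \<phi> where bij: "bij_betw \<phi> (lideal A0 f) (P la)"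
    and lin: "\<forall>a\<in>A0. \<forall>x\<in>lideal A0 f. \<phi> (a * x) = a * \<phi> x"
    using li unfolding liso_def by blast
  have fL: "f \<in> lideal A0 f" unfolding lideal_def using fA by (metis (mono_tags, lifting) mem_Collect_eq)
  define p where "p = \<phi> f"
  obtain a1 where a1: "a1 \<in> A0" "p = a1 * e la"
    using bij fL bij_betwE unfolding p_def lideal_def by blast
  have pA: "p \<in> A0" using A0_mult[OF a1(1) e_in[OF la]] a1(2) by simp
  have pe: "p * e la = p" unfolding a1(2) by (simp add: mult.assoc e_idem[OF la])
  obtain q where q: "q \<in> lideal A0 f" "\<phi> q = e la"
    using bij e_in_P[OF la] by (metis bij_betw_iff_bijections)
  obtain a2 where a2: "a2 \<in> A0" "q = a2 * f" using q(1) unfolding lideal_def by blast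
  have qA: "q \<in> A0" using A0_mult[OF a2(1) fA(1)] a2(2) by simp
  have "p * q = (p * a2) * f" by (simp add: a2(2) mult.assoc)
  then have pq: "p * q \<in> lideal A0 f" unfolding lideal_def using A0_mult[OF pA a2(1)] by blast
  have "\<phi> (p * q) = \<phi> f" using lin pA q pe p_def by simp
  then have "p * q = f" using bij pq fL unfolding bij_betw_def inj_on_def by blast
  then have "f = p * e la * q" using pe by simp
  then show ?thesis using idem_span_gen[OF pA qA la] by simp
qed

text \<open>1 lies in the ideal: otherwise take an idempotent f \<notin> idem_span with A_0 f of least
  dimension; it is not primitive, and one of its two orthogonal summands is a smaller
  counterexample.\<close>
lemma one_in_idem_span: "1 \<in> idem_span"
proof (rule ccontr)
  assume one: "1 \<notin> idem_span"
  define Q where "Q f \<longleftrightarrow> f \<in> A0 \<and> f * f = f \<and> f \<notin> idem_span" for f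
  have Q1: "Q 1" unfolding Q_def using one one_Agr by simp
  obtain f where Qf: "Q f" and fmin: "\<forall>g. Q g \<longrightarrow> dim (lideal A0 f) \<le> dim (lideal A0 g)"
    using ex_has_least_nat[of Q 1 "\<lambda>f. dim (lideal A0 f)", OF Q1] by blast
  have fA: "f \<in> A0" "f * f = f" "f \<notin> idem_span" using Qf unfolding Q_def by auto
  have subJ: "subspace idem_span" unfolding idem_span_def by simp
  have "f \<noteq> 0" using fA(3) subJ subspace_0 by blast
  moreover have "\<not> prim_idem A0 f" using primitive_in_idem_span fA(3) by blast
  ultimately obtain g h where gh: "g \<in> A0" "h \<in> A0" "g * g = g" "h * h = h" "g * h = 0" "h * g = 0"
    "g \<noteq> 0" "h \<noteq> 0" "f = g + h"
    using fA unfolding prim_idem_def by blast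
  have smaller: "dim (lideal A0 g') < dim (lideal A0 f)"
    if g': "g' \<in> A0" "g' * f = g'" "f * h' = h'" "g' * h' = 0" "h' \<noteq> 0" for g' h'
  proof -
    have incl: "lideal A0 g' \<subseteq> lideal A0 f"
    proof
      fix x assume "x \<in> lideal A0 g'"
      then obtain a where a: "a \<in> A0" "x = a * g'" unfolding lideal_def by blast
      then have "x = (a * g') * f" using g'(2) by (simp add: mult.assoc)
      then show "x \<in> lideal A0 f" unfolding lideal_def using A0_mult[OF a(1) g'(1)] by blast
    qed
    have fL: "f \<in> lideal A0 f"
      unfolding lideal_def using fA by (metis (mono_tags, lifting) mem_Collect_eq)
    have fnL: "f \<notin> lideal A0 g'"
    proof
      assume "f \<in> lideal A0 g'"
      then obtain a where "f = a * g'" unfolding lideal_def by blast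
      then have "f * h' = a * (g' * h')" by (simp add: mult.assoc)
      then show False using g' by simp
    qed
    have "span (lideal A0 g') = lideal A0 g'" "span (lideal A0 f) = lideal A0 f"
      using lideal_sub[OF g'(1)] lideal_sub[OF fA(1)] by simp_all
    then have "span (lideal A0 g') \<subset> span (lideal A0 f)" using incl fL fnL by blast
    then show ?thesis by (rule dim_psubset_fd)
  qed
  show False
  proof (cases "g \<in> idem_span")
    case True
    then have "h \<notin> idem_span" using gh(9) fA(3) subJ subspace_add by metis
    then have "Q h" unfolding Q_def using gh by simp
    moreover have "dim (lideal A0 h) < dim (lideal A0 f)"
      by (rule smaller[of h g]) (use gh in \<open>simp_all add: distrib_left distrib_right\<close>)
    ultimately show False using fmin by fastforce
  next
    case False
    then have "Q g" unfolding Q_def using gh by simp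
    moreover have "dim (lideal A0 g) < dim (lideal A0 f)"
      by (rule smaller[of g h]) (use gh in \<open>simp_all add: distrib_left distrib_right\<close>)
    ultimately show False using fmin by fastforce
  qed
qed

text \<open>Consequently x z lies in a subspace W once every x (a e_nu b) z does, as x z = x 1 z.\<close>
lemma bimult_by_sandwiches:
  assumes "subspace W" "\<And>a b nu. a \<in> A0 \<Longrightarrow> b \<in> A0 \<Longrightarrow> nu \<in> \<Lambda> \<Longrightarrow> x * (a * e nu * b) * z \<in> W"
  shows "x * z \<in> W"
proof -
  have "x * 1 * z \<in> W"
    by (rule span_bimult[OF one_in_idem_span[unfolded idem_span_def] assms(1)]) (use assms(2) in blast)
  then show ?thesis by simp
qed

definition up_closed :: "'l set \<Rightarrow> bool" where
  "up_closed \<Omega> \<longleftrightarrow> \<Omega> \<subseteq> \<Lambda> \<and> (\<forall>s\<in>\<Omega>. \<forall>t\<in>\<Lambda>. (s, t) \<in> R \<longrightarrow> t \<in> \<Omega>)"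

lemma finite_has_minimal:
  assumes "finite \<Omega>" "\<Omega> \<subseteq> \<Lambda>" "\<Omega> \<noteq> {}"
  shows "\<exists>mu\<in>\<Omega>. \<forall>s\<in>\<Omega>. (s, mu) \<in> R \<longrightarrow> s = mu"
proof -
  define below where "below y = card {s \<in> \<Omega>. (s, y) \<in> R}" for y
  obtain mu where mu: "mu \<in> \<Omega>" and mmin: "\<forall>y. y \<in> \<Omega> \<longrightarrow> below mu \<le> below y"
    using ex_has_least_nat[of "\<lambda>y. y \<in> \<Omega>" _ below] assms(3) by blast
  have "s = mu" if s: "s \<in> \<Omega>" "(s, mu) \<in> R" for s
  proof (rule ccontr)
    assume ne: "s \<noteq> mu"
    have "mu \<in> {t \<in> \<Omega>. (t, mu) \<in> R} - {t \<in> \<Omega>. (t, s) \<in> R}"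
      using mu R_refl assms(2) R_antisym s(2) ne by blast
    moreover have "{t \<in> \<Omega>. (t, s) \<in> R} \<subseteq> {t \<in> \<Omega>. (t, mu) \<in> R}" using s R_trans by blast
    ultimately have "below s < below mu"
      unfolding below_def by (intro psubset_card_mono) (use assms(1) in auto)
    then show False using mmin s(1) by fastforce
  qed
  then show ?thesis using mu by blast
qed

lemma up_closed_remove_minimal:
  assumes "up_closed \<Omega>" "mu \<in> \<Omega>" "\<forall>s\<in>\<Omega>. (s, mu) \<in> R \<longrightarrow> s = mu"
  shows "up_closed (\<Omega> - {mu})"
  using assms unfolding up_closed_def by blast

end

section \<open>Choosing the weights la and mu\<close>

text \<open>Throughout, W is an A_0-sub-bimodule of A (later B \<inter> A_n) and n a degree.\<close>
locale qh_bimodule = qh_algebra scale Agr \<Lambda> R e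
  for scale :: "'k::field \<Rightarrow> 'a::ring_1 \<Rightarrow> 'a" and Agr \<Lambda> R e +
  fixes n :: nat and W :: "'a set"
  assumes W_sub: "subspace W"
    and W_left: "\<And>a x. a \<in> A0 \<Longrightarrow> x \<in> W \<Longrightarrow> a * x \<in> W"
    and W_right: "\<And>a x. a \<in> A0 \<Longrightarrow> x \<in> W \<Longrightarrow> x * a \<in> W"
begin

text \<open>A_n U(la) and V(mu) A_n: degree-n elements acting as zero from Delta(la) to nabla(mu)<n>,
  because U(la) = 0 in Delta(la) and V(mu) kills nabla(mu).\<close>
definition AnU where "AnU la = {x * u | x u. x \<in> Agr n \<and> u \<in> U la}"
definition VAn where "VAn mu = {v * y | v y. v \<in> V mu \<and> y \<in> Agr n}"

text \<open>Step 1: some y e_la is not in W + A_n U(la).  Otherwise A_n U(la) \<subseteq> W by induction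
  along the filtration of U(la), so A_n e_la \<subseteq> W for all la, and A_n = A_n 1 \<subseteq> W.\<close>
lemma top_weight_exists:
  assumes notall: "\<not> Agr n \<subseteq> W"
  shows "\<exists>la\<in>\<Lambda>. \<exists>y\<in>Agr n. y * e la \<notin> span (W \<union> AnU la)"
proof (rule ccontr)
  assume "\<not> ?thesis"
  then have H: "\<And>la y. la \<in> \<Lambda> \<Longrightarrow> y \<in> Agr n \<Longrightarrow> y * e la \<in> span (W \<union> AnU la)" by blast
  have AnU_W: "x * u \<in> W" if la: "la \<in> \<Lambda>" and x: "x \<in> Agr n" and u: "u \<in> U la" for la x u
  proof -
    let ?T = "{k. \<forall>x\<in>Agr n. x * k \<in> W}"
    have "U la \<subseteq> ?T"
    proof (rule trace_induct[OF la])
      show "0 \<in> ?T" using W_sub subspace_0 by auto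
      show "k \<in> ?T \<Longrightarrow> k' \<in> ?T \<Longrightarrow> k + k' \<in> ?T" for k k'
        using W_sub subspace_add by (fastforce simp: distrib_left)
    next
      fix s \<kappa> b assume s: "s \<in> \<Lambda>" and kA: "\<kappa> \<in> A0" and ek: "e s * \<kappa> = \<kappa>"
        and b: "b \<in> A0" and uk: "\<forall>u\<in>U s. u * \<kappa> \<in> ?T"
      show "b * \<kappa> \<in> ?T"
      proof (intro CollectI ballI)
        fix x assume x: "x \<in> Agr n"
        have "x * b * e s * \<kappa> \<in> W"
        proof (rule span_mult_right[OF H[OF s mult_A0_right[OF x b]] W_sub])
          fix z assume "z \<in> W \<union> AnU s"
          then show "z * \<kappa> \<in> W"
            using W_right[OF kA] uk unfolding AnU_def by (auto simp: mult.assoc)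
        qed
        then show "x * (b * \<kappa>) \<in> W" using ek by (simp add: mult.assoc)
      qed
    qed
    then show ?thesis using x u by blast
  qed
  have top_W: "y * e la \<in> W" if "la \<in> \<Lambda>" "y \<in> Agr n" for la y
    by (rule span_into[OF H[OF that] W_sub]) (use AnU_W that in \<open>auto simp: AnU_def\<close>)
  have "y \<in> W" if y: "y \<in> Agr n" for y
  proof -
    have "y * (a * e nu * b) * 1 \<in> W" if "a \<in> A0" "b \<in> A0" "nu \<in> \<Lambda>" for a b nu
      using W_right[OF that(2) top_W[OF that(3) mult_A0_right[OF y that(1)]]] by (simp add: mult.assoc)
    then show ?thesis using bimult_by_sandwiches[OF W_sub, of y 1] by simp
  qed
  then show False using notall by blast
qed

definition through where
  "through la \<Omega> = {a * e s * y | a s y. a \<in> A0 \<and> s \<in> \<Omega> \<and> y \<in> Agr n \<and> y * e la = y}"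
definition reach where "reach la \<Omega> = span (W \<union> AnU la \<union> through la \<Omega>)"

lemma reach_sub: "subspace (reach la \<Omega>)" unfolding reach_def by simp

lemma in_reach: "x \<in> W \<union> AnU la \<union> through la \<Omega> \<Longrightarrow> x \<in> reach la \<Omega>"
  unfolding reach_def by (rule span_base)

text \<open>With all weights available, A_n e_la is reached, since 1 is a sum of sandwiches.\<close>
lemma reach_all:
  assumes y: "y \<in> Agr n" "y * e la = y"
  shows "y \<in> reach la \<Lambda>"
proof -
  have "1 * (a * e nu * b) * y \<in> reach la \<Lambda>" if "a \<in> A0" "b \<in> A0" "nu \<in> \<Lambda>" for a b nu
  proof (rule in_reach)
    have "b * y \<in> Agr n" "b * y * e la = b * y" using mult_A0_left[OF that(2) y(1)] y(2)
      by (auto simp: mult.assoc)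
    then show "1 * (a * e nu * b) * y \<in> W \<union> AnU la \<union> through la \<Lambda>"
      unfolding through_def using that by (force simp: mult.assoc)
  qed
  then show ?thesis using bimult_by_sandwiches[OF reach_sub, of 1 y] by simp
qed

text \<open>For mu minimal in an up-closed Omega, V(mu) A_n e_la is reached without mu: by
  quasi-heredity e_mu A_0 e_nu (nu \<not>\<le> mu) factors through weights s > mu, which lie in Omega.\<close>
lemma V_through_upper:
  assumes up: "up_closed \<Omega>" and mu: "mu \<in> \<Omega>" and a: "a \<in> A0" and v: "v \<in> V mu"
    and y: "y \<in> Agr n" "y * e la = y"
  shows "a * v * y \<in> reach la (\<Omega> - {mu})"
proof (rule span_bimult[OF v[unfolded costd_tr_def] reach_sub])
  have muL: "mu \<in> \<Lambda>" using up mu unfolding up_closed_def by blast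
  fix s assume "s \<in> {e mu * a * e nu * b |a b nu. a \<in> A0 \<and> b \<in> A0 \<and> nu \<in> \<Lambda> \<and> (nu, mu) \<notin> R}"
  then obtain c d nu where s: "s = e mu * c * e nu * d" "c \<in> A0" "d \<in> A0" "nu \<in> \<Lambda>" "(nu, mu) \<notin> R"
    by blast
  have dy: "d * y \<in> Agr n" "d * y * e la = d * y" using mult_A0_left[OF s(3) y(1)] y(2)
    by (auto simp: mult.assoc)
  have "a * (e mu * c * e nu) * (d * y) \<in> reach la (\<Omega> - {mu})"
  proof (rule span_bimult[OF idempotent_sandwich_factors[OF muL s(4) s(2),
          unfolded common_upper_span_def] reach_sub])
    fix t assume "t \<in> {c * e s * d |c d s. c \<in> A0 \<and> d \<in> A0 \<and> s \<in> \<Lambda> \<and> (mu, s) \<in> R \<and> (nu, s) \<in> R}"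
    then obtain c' d' s' where t: "t = c' * e s' * d'" "c' \<in> A0" "d' \<in> A0" "s' \<in> \<Lambda>"
        "(mu, s') \<in> R" "(nu, s') \<in> R"
      by blast
    have "s' \<in> \<Omega> - {mu}" using up mu t(4,5,6) s(5) unfolding up_closed_def by blast
    moreover have "d' * (d * y) \<in> Agr n" "d' * (d * y) * e la = d' * (d * y)"
      using mult_A0_left[OF t(3) dy(1)] dy(2) by (auto simp: mult.assoc)
    ultimately have "(a * c') * e s' * (d' * (d * y)) \<in> through la (\<Omega> - {mu})"
      unfolding through_def using A0_mult[OF a t(2)] by blast
    then show "a * t * (d * y) \<in> reach la (\<Omega> - {mu})"
      using in_reach t(1) by (simp add: mult.assoc)
  qed
  then show "a * s * y \<in> reach la (\<Omega> - {mu})" using s(1) by (simp add: mult.assoc)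
qed

lemma reach_remove_minimal:
  assumes la: "la \<in> \<Lambda>" and up: "up_closed \<Omega>" and mu: "mu \<in> \<Omega>"
    and H: "\<And>y. y \<in> Agr n \<Longrightarrow> y * e la = y \<Longrightarrow> e mu * y \<in> span (W \<union> AnU la \<union> VAn mu)"
  shows "reach la \<Omega> \<subseteq> reach la (\<Omega> - {mu})"
  unfolding reach_def[of la \<Omega>]
proof (rule span_minimal[OF _ reach_sub])
  have ela: "e la \<in> A0" using e_in[OF la] .
  have via_mu: "a * e mu * y \<in> reach la (\<Omega> - {mu})" if a: "a \<in> A0" and y: "y \<in> Agr n" "y * e la = y" for a y
  proof -
    have "a * (e mu * y) * e la \<in> reach la (\<Omega> - {mu})"
    proof (rule span_bimult[OF H[OF y] reach_sub])
      fix z assume "z \<in> W \<union> AnU la \<union> VAn mu"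
      then consider "z \<in> W" | x u where "z = x * u" "x \<in> Agr n" "u \<in> U la"
        | v y' where "z = v * y'" "v \<in> V mu" "y' \<in> Agr n"
        unfolding AnU_def VAn_def by blast
      then show "a * z * e la \<in> reach la (\<Omega> - {mu})"
      proof cases
        case 1
        then show ?thesis using W_left[OF a] W_right[OF ela] in_reach by blast
      next
        case (2 x u)
        have "a * z * e la = (a * x) * u" using 2 U_idem[OF 2(3) la] by (simp add: mult.assoc)
        then have "a * z * e la \<in> AnU la"
          unfolding AnU_def using mult_A0_left[OF a 2(2)] 2(3) by blast
        then show ?thesis using in_reach by blast
      next
        case (3 v y')
        have "y' * e la \<in> Agr n" "y' * e la * e la = y' * e la"
          using mult_A0_right[OF 3(3) ela] e_idem[OF la] by (auto simp: mult.assoc)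
        then show ?thesis using V_through_upper[OF up mu a 3(2)] 3(1) by (simp add: mult.assoc)
      qed
    qed
    then show ?thesis using y(2) by (simp add: mult.assoc)
  qed
  show "W \<union> AnU la \<union> through la \<Omega> \<subseteq> reach la (\<Omega> - {mu})"
  proof
    fix g assume "g \<in> W \<union> AnU la \<union> through la \<Omega>"
    then consider "g \<in> W \<union> AnU la" | a s y where "g = a * e s * y" "a \<in> A0" "s \<in> \<Omega>"
        "y \<in> Agr n" "y * e la = y"
      unfolding through_def by blast
    then show "g \<in> reach la (\<Omega> - {mu})"
    proof cases
      case 1
      then show ?thesis using in_reach by blast
    next
      case (2 a s y)
      show ?thesis
      proof (cases "s = mu")
        case True
        then show ?thesis using via_mu[OF 2(2,4,5)] 2(1) by simp
      next
        case False
        then have "g \<in> through la (\<Omega> - {mu})" unfolding through_def using 2 by blast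
        then show ?thesis using in_reach by blast
      qed
    qed
  qed
qed

text \<open>Step 2: given la as in step 1, some mu has e_mu A_n e_la \<not>\<subseteq> W + A_n U(la) + V(mu) A_n.
  Otherwise the minimal weights can be removed one by one from Lambda (up-closed), so that
  A_n e_la \<subseteq> reach la {} = W + A_n U(la).\<close>
lemma bottom_weight_exists:
  assumes la: "la \<in> \<Lambda>" and y1: "y1 \<in> Agr n" and y1n: "y1 * e la \<notin> span (W \<union> AnU la)"
  shows "\<exists>mu\<in>\<Lambda>. \<exists>y. y \<in> Agr n \<and> y * e la = y \<and> e mu * y \<notin> span (W \<union> AnU la \<union> VAn mu)"
proof (rule ccontr)
  assume "\<not> ?thesis"
  then have H: "\<And>mu y. mu \<in> \<Lambda> \<Longrightarrow> y \<in> Agr n \<Longrightarrow> y * e la = y \<Longrightarrow>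
      e mu * y \<in> span (W \<union> AnU la \<union> VAn mu)" by blast
  have shrink: "reach la \<Omega> \<subseteq> reach la {}" if "up_closed \<Omega>" for \<Omega>
    using that
  proof (induction "card \<Omega>" arbitrary: \<Omega> rule: less_induct)
    case less
    have fin: "finite \<Omega>" and Om: "\<Omega> \<subseteq> \<Lambda>"
      using less.prems Lambda_finite finite_subset unfolding up_closed_def by auto
    show ?case
    proof (cases "\<Omega> = {}")
      case False
      obtain mu where mu: "mu \<in> \<Omega>" and mumin: "\<forall>s\<in>\<Omega>. (s, mu) \<in> R \<longrightarrow> s = mu"
        using finite_has_minimal[OF fin Om False] by blast
      have "reach la \<Omega> \<subseteq> reach la (\<Omega> - {mu})"
        using reach_remove_minimal[OF la less.prems mu H] mu Om by blast
      also have "\<dots> \<subseteq> reach la {}"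
        using less.hyps[OF card_Diff1_less[OF fin mu] up_closed_remove_minimal[OF less.prems mu mumin]] .
      finally show ?thesis .
    qed simp
  qed
  have "e la * e la = e la" "e la \<in> A0" using e_idem[OF la] e_in[OF la] by auto
  then have "y1 * e la \<in> reach la \<Lambda>"
    using reach_all[OF mult_A0_right[OF y1]] by (simp add: mult.assoc)
  moreover have "up_closed \<Lambda>" unfolding up_closed_def by blast
  moreover have "reach la {} = span (W \<union> AnU la)" unfolding reach_def through_def by simp
  ultimately show False using shrink y1n by blast
qed

lemma extension_weights_exist:
  assumes "\<not> Agr n \<subseteq> W"
  shows "\<exists>la\<in>\<Lambda>. \<exists>mu\<in>\<Lambda>. \<exists>y. y \<in> Agr n \<and> y * e la = y \<and> e mu * y \<notin> span (W \<union> AnU la \<union> VAn mu)"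
  using top_weight_exists[OF assms] bottom_weight_exists by blast

end

section \<open>The subalgebra generated by A_0 and A_1\<close>

context graded_algebra
begin

lemma separating_functional:
  assumes T: "subspace T" and w: "w \<notin> T"
  shows "\<exists>\<theta> :: 'a \<Rightarrow> 'k. (\<forall>x y. \<theta> (x + y) = \<theta> x + \<theta> y) \<and> (\<forall>c x. \<theta> (scale c x) = c * \<theta> x) \<and>
           (\<forall>x\<in>T. \<theta> x = 0) \<and> \<theta> w = 1"
proof -
  obtain BT where BT: "BT \<subseteq> T" "independent BT" "T \<subseteq> span BT"
    using maximal_independent_subset[of T] by blast
  have spT: "span BT = T" using BT span_minimal[OF BT(1) T] by blast
  have ind: "independent (insert w BT)" using independent_insertI[OF _ BT(2)] w spT by simp
  have field_vs: "vector_space ((*) :: 'k \<Rightarrow> 'k \<Rightarrow> 'k)"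
    by unfold_locales (auto simp: algebra_simps)
  interpret VP: vector_space_pair scale "(*) :: 'k \<Rightarrow> 'k \<Rightarrow> 'k"
    by (intro vector_space_pair.intro vector_space_axioms field_vs)
  obtain g where g: "Vector_Spaces.linear scale (*) g" "\<forall>x\<in>insert w BT. g x = (if x = w then 1 else 0)"
    using VP.linear_independent_extend[OF ind, of "\<lambda>x. if x = w then (1::'k) else 0"] by blast
  have add: "\<forall>x y. g (x + y) = g x + g y" and sc: "\<forall>c x. g (scale c x) = c * g x"
    using g(1) unfolding Vector_Spaces.linear_iff by auto
  have "g x = 0" if "x \<in> T" for x
  proof -
    have "x \<in> span BT" using spT that by simp
    then show ?thesis
    proof (induct x rule: span_induct_alt)
      case base
      show ?case using sc[rule_format, of 0 0] by simp
    next
      case (step c s y)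
      have "s \<noteq> w" using step(1) BT(1) w by blast
      then show ?case using g(2) step add sc by simp
    qed
  qed
  then show ?thesis using add sc g(2) by (intro exI[of _ g]) auto
qed

abbreviation B where "B \<equiv> alg_gen scale (Agr 0 \<union> Agr 1)"

lemma B_0: "0 \<in> B"
proof -
  have "scale 0 1 \<in> B" by (rule alg_gen.smult[OF alg_gen.one])
  then show ?thesis by simp
qed
lemma B_A0: "x \<in> A0 \<Longrightarrow> x \<in> B" by (rule alg_gen.base) simp
lemma B_A1: "x \<in> Agr 1 \<Longrightarrow> x \<in> B" by (rule alg_gen.base) simp

lemma B_sum: "(\<And>i. i \<in> S \<Longrightarrow> f i \<in> B) \<Longrightarrow> sum f S \<in> B"
proof (induct S rule: infinite_finite_induct)
  case (insert x F)
  then show ?case using alg_gen.add by (metis insertCI sum.insert)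
qed (use B_0 in simp_all)

lemma B_sub: "subspace B"
  unfolding subspace_def using B_0 alg_gen.add alg_gen.smult by blast

lemma B_all: assumes "\<And>i. Agr i \<subseteq> B" shows "B = UNIV"
proof -
  have "x \<in> B" for x
  proof -
    obtain N where N: "\<forall>i\<ge>N. hc i x = 0" using hcomp_bound by blast
    have "(\<Sum>i<N. hc i x) \<in> B" using assms hcomp_in by (blast intro: B_sum)
    then show ?thesis using hcomp_sum_lt[OF N] by simp
  qed
  then show ?thesis by blast
qed

lemma least_ungenerated_degree:
  assumes "B \<noteq> UNIV"
  shows "\<exists>n. 2 \<le> n \<and> (\<forall>i<n. Agr i \<subseteq> B) \<and> \<not> Agr n \<subseteq> B"
proof -
  have ex: "\<exists>i. \<not> Agr i \<subseteq> B" using B_all assms by blast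
  define n where "n = (LEAST i. \<not> Agr i \<subseteq> B)"
  have nB: "\<not> Agr n \<subseteq> B" unfolding n_def using LeastI_ex[OF ex] .
  have low: "\<forall>i<n. Agr i \<subseteq> B" unfolding n_def using not_less_Least by blast
  have "n \<noteq> 0" "n \<noteq> 1" using nB B_A0 B_A1 by auto
  then have "2 \<le> n" by linarith
  then show ?thesis using nB low by blast
qed

text \<open>In that degree, the degree-n part of a product is hc_0 x hc_n y + hc_n x hc_0 y modulo
  B \<inter> A_n: all other terms are products of components of degree strictly between 0 and n.\<close>
lemma hcn_mult:
  assumes n: "2 \<le> n" and low: "\<And>i. i < n \<Longrightarrow> Agr i \<subseteq> B"
  shows "hc n (x * y) - (hc 0 x * hc n y + hc n x * hc 0 y) \<in> B \<inter> Agr n"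
proof -
  let ?f = "\<lambda>i. hc i x * hc (n - i) y"
  have dec: "{..n} = insert 0 (insert n {1..<n})" using n by auto
  have "hc n (x * y) = (\<Sum>i\<in>insert 0 (insert n {1..<n}). ?f i)" by (simp add: hcomp_mult dec)
  also have "\<dots> = ?f 0 + (?f n + (\<Sum>i\<in>{1..<n}. ?f i))" using n by (simp add: sum.insert)
  finally have eq: "hc n (x * y) - (hc 0 x * hc n y + hc n x * hc 0 y) = (\<Sum>i\<in>{1..<n}. ?f i)"
    by (simp add: algebra_simps)
  have "(\<Sum>i\<in>{1..<n}. ?f i) \<in> B"
  proof (rule B_sum)
    fix i assume i: "i \<in> {1..<n}"
    then have "i < n" "n - i < n" by auto
    then have "hc i x \<in> B" "hc (n - i) y \<in> B" using low hcomp_in by blast+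
    then show "?f i \<in> B" by (rule alg_gen.mult)
  qed
  moreover have "(\<Sum>i\<in>{1..<n}. ?f i) \<in> Agr n"
  proof (rule sum_Agr)
    fix i assume "i \<in> {1..<n}"
    then show "?f i \<in> Agr n" using mult_Agr[OF hcomp_in hcomp_in, of i x "n - i" y] by simp
  qed
  ultimately show ?thesis unfolding eq by blast
qed

end

lemma (in qh_algebra) generated_part_bimodule: "qh_bimodule scale Agr \<Lambda> R e (B \<inter> Agr n)"
proof (unfold_locales)
  show "subspace (B \<inter> Agr n)" using subspace_inter[OF B_sub sub_Agr] .
  show "a * x \<in> B \<inter> Agr n" if "a \<in> A0" "x \<in> B \<inter> Agr n" for a x
    using that alg_gen.mult[OF B_A0[OF that(1)]] mult_A0_left[OF that(1)] by blast
  show "x * a \<in> B \<inter> Agr n" if "a \<in> A0" "x \<in> B \<inter> Agr n" for a x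
    using that alg_gen.mult[OF _ B_A0[OF that(1)]] mult_A0_right[OF _ that(1)] by blast
qed

section \<open>The non-split extension\<close>

context qh_algebra
begin

text \<open>Delta(la) = P(la)/U(la) is realised by cosets x + U(la); rep picks a representative.\<close>
definition cos where "cos la x = (\<lambda>u. x + u) ` U la"
definition rep :: "'a set \<Rightarrow> 'a" where "rep X = (SOME x. x \<in> X)"

lemma cos_mem: "y \<in> cos la x \<longleftrightarrow> y - x \<in> U la"
  unfolding cos_def image_iff by (metis add_diff_cancel_left' diff_add_cancel add.commute)

lemma cos_self: "x \<in> cos la x" using cos_mem U0 by simp

lemma cos0: "cos la 0 = U la"
  unfolding cos_def by simp

lemma cos_eq: "cos la x = cos la y \<longleftrightarrow> x - y \<in> U la"
proof
  assume "cos la x = cos la y"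
  then show "x - y \<in> U la" using cos_self cos_mem by blast
next
  assume xy: "x - y \<in> U la"
  have "z - y = (z - x) + (x - y)" "z - x = (z - y) - (x - y)" for z by simp_all
  then show "cos la x = cos la y" unfolding set_eq_iff cos_mem using xy U_add U_diff by metis
qed

lemma cos_add: "{a + b |a b. a \<in> cos la x \<and> b \<in> cos la y} = cos la (x + y)"
proof (intro set_eqI iffI)
  fix z assume "z \<in> {a + b |a b. a \<in> cos la x \<and> b \<in> cos la y}"
  then obtain a b where ab: "z = a + b" "a - x \<in> U la" "b - y \<in> U la" unfolding cos_mem by blast
  have eq: "z - (x + y) = (a - x) + (b - y)" using ab(1) by simp
  show "z \<in> cos la (x + y)" unfolding cos_mem eq by (rule U_add[OF ab(2,3)])
next
  fix z assume "z \<in> cos la (x + y)"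
  then have "z - x - y \<in> U la" unfolding cos_mem by (simp add: algebra_simps)
  moreover have "z = x + (z - x)" by simp
  ultimately show "z \<in> {a + b |a b. a \<in> cos la x \<and> b \<in> cos la y}"
    using cos_self cos_mem by (metis (mono_tags, lifting) diff_diff_eq mem_Collect_eq)
qed

lemma cos_act:
  assumes c: "c \<in> A0"
  shows "{c * a + u |a u. a \<in> cos la x \<and> u \<in> U la} = cos la (c * x)"
proof (intro set_eqI iffI)
  fix z assume "z \<in> {c * a + u |a u. a \<in> cos la x \<and> u \<in> U la}"
  then obtain a u where au: "z = c * a + u" "a - x \<in> U la" "u \<in> U la" unfolding cos_mem by blast
  have "z - c * x = c * (a - x) + u" using au(1) by (simp add: algebra_simps)
  then show "z \<in> cos la (c * x)" unfolding cos_mem using U_add[OF U_mult_left[OF c au(2)] au(3)] by simp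
next
  fix z assume "z \<in> cos la (c * x)"
  then have "z - c * x \<in> U la" unfolding cos_mem .
  moreover have "z = c * x + (z - c * x)" by simp
  ultimately show "z \<in> {c * a + u |a u. a \<in> cos la x \<and> u \<in> U la}"
    using cos_self by blast
qed

lemma cos_rep: "rep (cos la x) - x \<in> U la"
proof -
  have "rep (cos la x) \<in> cos la x" unfolding rep_def using cos_self by (rule someI)
  then show ?thesis using cos_mem by blast
qed

end

context graded_algebra
begin

lemma quotient_coordinates:
  assumes U: "subspace U"
  shows "\<exists>(N::nat) \<phi>. (\<forall>x y. \<phi> (x + y) = (\<lambda>i. \<phi> x i + \<phi> y i)) \<and> (\<forall>c x. \<phi> (scale c x) = (\<lambda>i. c * \<phi> x i))
           \<and> (\<forall>x. \<phi> x = (\<lambda>_. 0) \<longleftrightarrow> x \<in> U) \<and> (\<forall>x i. N \<le> i \<longrightarrow> \<phi> x i = (0 :: 'k))"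
proof -
  obtain B0 where B0: "finite B0" "span B0 = UNIV" using fin_span by blast
  obtain BU where BU: "BU \<subseteq> U" "independent BU" "U \<subseteq> span BU"
    using maximal_independent_subset[of U] by blast
  have spBU: "span BU = U" using BU span_minimal[OF BU(1) U] by blast
  define BB where "BB = extend_basis BU"
  have BB: "BU \<subseteq> BB" "independent BB" "span BB = UNIV"
    unfolding BB_def using extend_basis_superset[OF BU(2)] independent_extend_basis[OF BU(2)]
      span_extend_basis[OF BU(2)] by auto
  have inspan: "x \<in> span BB" for x using BB(3) by simp
  have "finite BB" using independent_span_bound[OF B0(1) BB(2)] B0(2) by blast
  then obtain cs where cs: "set cs = BB - BU" using finite_list[of "BB - BU"] by blast
  define \<phi> where "\<phi> x i = (if i < length cs then representation BB x (cs ! i) else 0)" for x i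
  have kernel: "x \<in> U \<longleftrightarrow> (\<forall>b\<in>BB - BU. representation BB x b = 0)" for x
  proof
    assume "x \<in> U"
    then have "representation BB x = representation BU x"
      using representation_extend[OF BB(2) _ BB(1)] spBU by simp
    then show "\<forall>b\<in>BB - BU. representation BB x b = 0"
      using representation_ne_zero[of BU x] by auto
  next
    assume zero: "\<forall>b\<in>BB - BU. representation BB x b = 0"
    have "x = (\<Sum>b | representation BB x b \<noteq> 0. scale (representation BB x b) b)"
      using sum_nonzero_representation_eq[OF BB(2) inspan] by simp
    also have "\<dots> \<in> span BU"
    proof (rule span_sum)
      fix b assume "b \<in> {b. representation BB x b \<noteq> 0}"
      then have "b \<in> BU" using zero representation_ne_zero by blast
      then show "scale (representation BB x b) b \<in> span BU" by (intro span_scale span_base)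
    qed
    finally show "x \<in> U" using spBU by simp
  qed
  show ?thesis
  proof (intro exI[of _ "length cs"] exI[of _ \<phi>] conjI allI impI)
    show "\<phi> (x + y) = (\<lambda>i. \<phi> x i + \<phi> y i)" for x y
      by (auto simp: \<phi>_def representation_add[OF BB(2) inspan inspan])
    show "\<phi> (scale c x) = (\<lambda>i. c * \<phi> x i)" for c x
      by (auto simp: \<phi>_def representation_scale[OF BB(2) inspan])
    show "\<phi> x = (\<lambda>_. 0) \<longleftrightarrow> x \<in> U" for x
      unfolding kernel cs[symmetric] by (auto simp: \<phi>_def fun_eq_iff in_set_conv_nth) (metis nth_mem)
    show "length cs \<le> i \<Longrightarrow> \<phi> x i = 0" for x i by (simp add: \<phi>_def)
  qed
qed

end

locale extension_construction = qh_algebra scale Agr \<Lambda> R e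
  for scale :: "'k::field \<Rightarrow> 'a::ring_1 \<Rightarrow> 'a" and Agr and \<Lambda> :: "'l set" and R e +
  fixes n :: nat and la mu :: 'l and \<theta> :: "'a \<Rightarrow> 'k" and y0 :: 'a
  assumes n2: "2 \<le> n" and low: "\<And>i. i < n \<Longrightarrow> Agr i \<subseteq> B"
    and la: "la \<in> \<Lambda>" and mu: "mu \<in> \<Lambda>"
    and th_add: "\<And>x y. \<theta> (x + y) = \<theta> x + \<theta> y" and th_scale: "\<And>c x. \<theta> (scale c x) = c * \<theta> x"
    and th_B: "\<And>x. x \<in> B \<Longrightarrow> x \<in> Agr n \<Longrightarrow> \<theta> x = 0"
    and th_U: "\<And>x u. x \<in> Agr n \<Longrightarrow> u \<in> U la \<Longrightarrow> \<theta> (x * u) = 0"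
    and th_V: "\<And>v y. v \<in> V mu \<Longrightarrow> y \<in> Agr n \<Longrightarrow> \<theta> (v * y) = 0"
    and y0: "y0 \<in> Agr n" "y0 * e la = y0" and th_y0: "\<theta> (e mu * y0) \<noteq> 0"
begin

lemma th_0: "\<theta> 0 = 0"
  using th_scale[of 0 0] by simp

lemma n0: "n \<noteq> 0" using n2 by simp

lemma hcn_A0: "x \<in> A0 \<Longrightarrow> hc n x = 0" using n0 by (simp add: hcomp_homog)

lemma hc0_mult_A0: "a \<in> A0 \<Longrightarrow> hc 0 (z * a) = hc 0 z * a"
  using hc0_mult[of z a] hc0_A0 by simp

lemma e_mu: "e mu \<in> A0" "e mu * e mu = e mu" using e_in[OF mu] e_idem[OF mu] by auto

text \<open>Carriers of Delta(la) and of nabla(mu) (the latter as linear forms on e_mu A_0 / V(mu)).\<close>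
definition CM where "CM = cos la ` P la"
definition CN :: "('a \<Rightarrow> 'k) set" where
  "CN = {f. (\<forall>x y. f (x + y) = f x + f y) \<and> (\<forall>c x. f (scale c x) = c * f x) \<and>
            (\<forall>x. f x = f (e mu * hcomp Agr 0 x)) \<and> (\<forall>x\<in>V mu. f x = 0)}"

abbreviation M where "M \<equiv> Delta0 scale Agr \<Lambda> R e la"
abbreviation N where "N \<equiv> shift (int n) (Nabla0 scale Agr \<Lambda> R e mu)"

definition addM :: "'a set \<Rightarrow> 'a set \<Rightarrow> 'a set" where "addM X Y = {x + y |x y. x \<in> X \<and> y \<in> Y}"
definition actM :: "'a \<Rightarrow> 'a set \<Rightarrow> 'a set" where "actM a X = {hcomp Agr 0 a * x + u |x u. x \<in> X \<and> u \<in> U la}"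

lemma M_simps: "gcar M = CM" "gzero M = U la" "gadd M = addM" "gact M = actM"
   "gdeg M = (\<lambda>i. if i = 0 then CM else {U la})"
  unfolding Delta0_def Let_def CM_def cos_def[abs_def] addM_def[abs_def] actM_def[abs_def] by simp_all

lemma N_simps: "gcar N = CN" "gzero N = (\<lambda>_. 0)" "gadd N = (\<lambda>f g x. f x + g x)"
   "gact N = (\<lambda>a f x. f (x * hcomp Agr 0 a))"
   "gdeg N = (\<lambda>i. if i = int n then CN else {\<lambda>_. 0})"
  unfolding Nabla0_def shift_def Let_def CN_def by simp_all

text \<open>The cocycle: the degree-n part of a, paired via theta, sends the coset X \<in> Delta(la) to
  the form z \<mapsto> theta(e_mu z_0 a_n x) on nabla(mu).\<close>
definition psi where "psi a X z = \<theta> (e mu * hc 0 z * hc n a * rep X)"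

definition E :: "('a, ('a \<Rightarrow> 'k) \<times> 'a set) gmod" where
  "E = \<lparr> gcar = CN \<times> CM, gzero = (\<lambda>_. 0, U la),
         gadd = (\<lambda>x y. (gadd N (fst x) (fst y), gadd M (snd x) (snd y))),
         gact = (\<lambda>a x. (\<lambda>z. gact N a (fst x) z + psi a (snd x) z, gact M a (snd x))),
         gdeg = (\<lambda>i. gdeg N i \<times> gdeg M i) \<rparr>"

lemma E_simps: "gcar E = CN \<times> CM" "gzero E = (\<lambda>_. 0, U la)"
  "gadd E x y = (\<lambda>z. fst x z + fst y z, addM (snd x) (snd y))"
  "gact E a x = (\<lambda>z. fst x (z * hc 0 a) + psi a (snd x) z, actM a (snd x))"
  "gdeg E i = (if i = int n then CN else {\<lambda>_. 0}) \<times> (if i = 0 then CM else {U la})"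
  by (simp_all add: E_def M_simps N_simps)

lemma CM_cosI: "x \<in> P la \<Longrightarrow> cos la x \<in> CM" unfolding CM_def by blast
lemma U_CM: "U la \<in> CM" using CM_cosI[OF subspace_0[OF P_sub[OF la]]] cos0 by simp

lemma carE: "v \<in> gcar E \<Longrightarrow> \<exists>f x. v = (f, cos la x) \<and> f \<in> CN \<and> x \<in> P la"
  unfolding E_simps CM_def by fastforce

lemma CN_add: "f \<in> CN \<Longrightarrow> f (x + y) = f x + f y" unfolding CN_def by blast
lemma CN_scale: "f \<in> CN \<Longrightarrow> f (scale c x) = c * f x" unfolding CN_def by blast
lemma CN_e: "f \<in> CN \<Longrightarrow> f x = f (e mu * hc 0 x)" unfolding CN_def by blast
lemma CN_V: "f \<in> CN \<Longrightarrow> x \<in> V mu \<Longrightarrow> f x = 0" unfolding CN_def by blast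
lemma CN_zero: "(\<lambda>_. 0) \<in> CN" unfolding CN_def by simp
lemma CN_addI: "f \<in> CN \<Longrightarrow> g \<in> CN \<Longrightarrow> (\<lambda>x. f x + g x) \<in> CN"
  unfolding CN_def by (auto simp: algebra_simps)

lemma actM_cos: "actM a (cos la x) = cos la (hc 0 a * x)"
  unfolding actM_def using cos_act[OF hcomp_in] by blast

lemma addM_cos: "addM (cos la x) (cos la y) = cos la (x + y)"
  unfolding addM_def using cos_add by blast

text \<open>psi is well defined on cosets because theta kills A_n U(la).\<close>
lemma psi_cos: "x \<in> A0 \<Longrightarrow> psi a (cos la x) z = \<theta> (e mu * hc 0 z * hc n a * x)"
proof -
  have w: "e mu * hc 0 z * hc n a \<in> Agr n" using mult_A0_left[OF A0_mult[OF e_mu(1) hcomp_in]] by simp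
  have "e mu * hc 0 z * hc n a * rep (cos la x) =
      e mu * hc 0 z * hc n a * x + e mu * hc 0 z * hc n a * (rep (cos la x) - x)"
    by (simp add: algebra_simps)
  moreover have "\<theta> (e mu * hc 0 z * hc n a * (rep (cos la x) - x)) = 0"
    using th_U[OF w cos_rep] .
  ultimately show ?thesis unfolding psi_def using th_add by simp
qed

lemma gactE_cos:
  assumes x: "x \<in> P la"
  shows "gact E a (f, cos la x) = (\<lambda>z. f (z * hc 0 a) + \<theta> (e mu * hc 0 z * hc n a * x), cos la (hc 0 a * x))"
  using psi_cos[OF P_A0[OF la x]] by (simp add: E_simps actM_cos)

text \<open>The new first component of a \<cdot> (f, x + U) is again a form on nabla(mu): linearity is
  clear, it factors through e_mu A_0, and it kills V(mu) since theta kills V(mu) A_n.\<close>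
lemma twisted_form_in_CN:
  assumes f: "f \<in> CN" and x: "x \<in> A0" and a0: "a0 \<in> A0" and an: "an \<in> Agr n"
  shows "(\<lambda>z. f (z * a0) + \<theta> (e mu * hc 0 z * an * x)) \<in> CN"
  unfolding CN_def
proof (intro CollectI conjI allI ballI)
  fix z z'
  show "f ((z + z') * a0) + \<theta> (e mu * hc 0 (z + z') * an * x) =
        f (z * a0) + \<theta> (e mu * hc 0 z * an * x) + (f (z' * a0) + \<theta> (e mu * hc 0 z' * an * x))"
    by (simp add: hcomp_add distrib_left distrib_right th_add CN_add[OF f] ac_simps)
next
  fix c z
  have "e mu * hc 0 (scale c z) * an * x = scale c (e mu * hc 0 z * an * x)"
    by (simp add: hcomp_scale) (metis scale_mult_left scale_mult_right)
  moreover have "f (scale c z * a0) = c * f (z * a0)" using CN_scale[OF f] by (metis scale_mult_left)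
  ultimately show "f (scale c z * a0) + \<theta> (e mu * hc 0 (scale c z) * an * x) =
        c * (f (z * a0) + \<theta> (e mu * hc 0 z * an * x))" by (simp add: th_scale distrib_left)
next
  fix z
  have h1: "hc 0 (e mu * hc 0 z) = e mu * hc 0 z" using hc0_A0[OF A0_mult[OF e_mu(1) hcomp_in]] .
  have "f (z * a0) = f (e mu * hc 0 z * a0)"
    using CN_e[OF f, of "z * a0"] by (simp add: hc0_mult_A0[OF a0] mult.assoc)
  then show "f (z * a0) + \<theta> (e mu * hc 0 z * an * x) =
      f (e mu * hc 0 z * a0) + \<theta> (e mu * hc 0 (e mu * hc 0 z) * an * x)"
    by (simp add: h1 mult.assoc[symmetric] e_mu(2))
next
  fix z assume z: "z \<in> V mu"
  have "e mu * hc 0 z * an * x = z * (an * x)"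
    using hc0_A0[OF V_in_A0[OF z mu]] V_idem[OF z mu] by (simp add: mult.assoc)
  then have "\<theta> (e mu * hc 0 z * an * x) = 0" using th_V[OF z mult_A0_right[OF an x]] by simp
  then show "f (z * a0) + \<theta> (e mu * hc 0 z * an * x) = 0"
    using CN_V[OF f V_mult_right[OF a0 z]] by simp
qed

end

context extension_construction
begin

text \<open>The cocycle identity: because theta kills B \<inter> A_n, only the extreme terms of the
  degree-n part of a product contribute.\<close>
lemma theta_product_split:
  assumes x: "x \<in> A0"
  shows "\<theta> (e mu * hc 0 z * hc n (a * b) * x) =
     \<theta> (e mu * hc 0 (z * hc 0 a) * hc n b * x) + \<theta> (e mu * hc 0 z * hc n a * (hc 0 b * x))"
proof -
  define D where "D = hc n (a * b) - (hc 0 a * hc n b + hc n a * hc 0 b)"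
  have D: "D \<in> B \<inter> Agr n" unfolding D_def using hcn_mult[OF n2 low] .
  have w: "e mu * hc 0 z \<in> A0" using A0_mult[OF e_mu(1) hcomp_in] .
  have "\<theta> (e mu * hc 0 z * D * x) = 0"
  proof (rule th_B)
    show "e mu * hc 0 z * D * x \<in> B"
      using D alg_gen.mult B_A0[OF w] B_A0[OF x] by blast
    show "e mu * hc 0 z * D * x \<in> Agr n"
      using mult_A0_right[OF mult_A0_left[OF w] x] D by blast
  qed
  moreover have "e mu * hc 0 z * hc n (a * b) * x =
      e mu * hc 0 z * hc 0 a * hc n b * x + e mu * hc 0 z * hc n a * hc 0 b * x + e mu * hc 0 z * D * x"
    unfolding D_def by (simp add: algebra_simps)
  ultimately show ?thesis by (simp add: th_add hc0_mult_A0 mult.assoc)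
qed

lemma act_closed:
  assumes v: "v \<in> gcar E" shows "gact E a v \<in> gcar E"
proof -
  obtain f x where fx: "v = (f, cos la x)" "f \<in> CN" "x \<in> P la" using carE[OF v] by blast
  have "(\<lambda>z. f (z * hc 0 a) + \<theta> (e mu * hc 0 z * hc n a * x)) \<in> CN"
    by (rule twisted_form_in_CN[OF fx(2) P_A0[OF la fx(3)] hcomp_in hcomp_in])
  moreover have "cos la (hc 0 a * x) \<in> CM" using CM_cosI[OF P_mult[OF hcomp_in fx(3)]] .
  ultimately show ?thesis using gactE_cos[OF fx(3)] fx by (simp add: E_simps)
qed

lemma act_gadd:
  assumes v: "v \<in> gcar E" and w: "w \<in> gcar E"
  shows "gact E a (gadd E v w) = gadd E (gact E a v) (gact E a w)"
proof -
  obtain f x where fx: "v = (f, cos la x)" "x \<in> P la" using carE[OF v] by blast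
  obtain g y where gy: "w = (g, cos la y)" "y \<in> P la" using carE[OF w] by blast
  have xy: "x + y \<in> P la" using subspace_add[OF P_sub[OF la] fx(2) gy(2)] .
  have vw: "gadd E v w = ((\<lambda>z. f z + g z), cos la (x + y))"
    using fx gy by (simp add: E_simps addM_cos)
  show ?thesis
    unfolding vw gactE_cos[OF xy] fx(1) gy(1) gactE_cos[OF fx(2)] gactE_cos[OF gy(2)]
    by (simp add: E_simps addM_cos actM_cos distrib_left th_add ac_simps psi_cos[OF P_A0[OF la xy]])
qed

lemma act_plus:
  assumes v: "v \<in> gcar E"
  shows "gact E (a + b) v = gadd E (gact E a v) (gact E b v)"
proof -
  obtain f x where fx: "v = (f, cos la x)" "f \<in> CN" "x \<in> P la" using carE[OF v] by blast
  show ?thesis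
    unfolding fx(1) gactE_cos[OF fx(3)]
    by (simp add: E_simps addM_cos hcomp_add distrib_left distrib_right th_add CN_add[OF fx(2)] ac_simps)
qed

lemma act_one:
  assumes v: "v \<in> gcar E"
  shows "gact E 1 v = v"
proof -
  obtain f x where fx: "v = (f, cos la x)" "x \<in> P la" using carE[OF v] by blast
  show ?thesis
    unfolding fx(1) gactE_cos[OF fx(2)] by (simp add: hc0_A0[OF one_Agr] hcn_A0[OF one_Agr] th_0)
qed

lemma act_mult:
  assumes v: "v \<in> gcar E"
  shows "gact E (a * b) v = gact E a (gact E b v)"
proof -
  obtain f x where fx: "v = (f, cos la x)" "x \<in> P la" using carE[OF v] by blast
  have bx: "hc 0 b * x \<in> P la" using P_mult[OF hcomp_in fx(2)] .
  show ?thesis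
    unfolding fx(1) gactE_cos[OF fx(2)] gactE_cos[OF bx]
    by (simp add: hc0_mult theta_product_split[OF P_A0[OF la fx(2)]] mult.assoc[symmetric] add.assoc)
qed

lemma gzero_car: "gzero E \<in> gcar E" by (simp add: E_simps CN_zero U_CM)

lemma gadd_car: "v \<in> gcar E \<Longrightarrow> w \<in> gcar E \<Longrightarrow> gadd E v w \<in> gcar E"
  using carE[of v] carE[of w] CN_addI CM_cosI subspace_add[OF P_sub[OF la]]
  by (fastforce simp: E_simps addM_cos)

lemma gadd_assoc:
  "v \<in> gcar E \<Longrightarrow> w \<in> gcar E \<Longrightarrow> u \<in> gcar E \<Longrightarrow> gadd E (gadd E v w) u = gadd E v (gadd E w u)"
  using carE[of v] carE[of w] carE[of u] by (auto simp: E_simps addM_cos add.assoc)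

lemma gadd_comm: "v \<in> gcar E \<Longrightarrow> w \<in> gcar E \<Longrightarrow> gadd E v w = gadd E w v"
  using carE[of v] carE[of w] by (auto simp: E_simps addM_cos add.commute)

lemma gadd_zero: "v \<in> gcar E \<Longrightarrow> gadd E (gzero E) v = v"
  using carE[of v] addM_cos[of 0] cos0 by (auto simp: E_simps)

lemma gadd_inv: "v \<in> gcar E \<Longrightarrow> \<exists>w\<in>gcar E. gadd E v w = gzero E"
proof -
  assume v: "v \<in> gcar E"
  obtain f x where fx: "v = (f, cos la x)" "f \<in> CN" "x \<in> P la" using carE[OF v] by blast
  have "(\<lambda>z. - f z) \<in> CN" using fx(2) unfolding CN_def by (auto simp: algebra_simps)
  then have "((\<lambda>z. - f z), cos la (- x)) \<in> gcar E"
    using CM_cosI[OF subspace_neg[OF P_sub[OF la] fx(3)]] by (simp add: E_simps)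
  moreover have "gadd E v ((\<lambda>z. - f z), cos la (- x)) = gzero E"
    unfolding fx(1) using addM_cos[of x "- x"] cos0 by (simp add: E_simps)
  ultimately show ?thesis by blast
qed

lemma zero_deg: "(\<lambda>_. 0, U la) \<in> gdeg E k"
  by (simp add: E_simps CN_zero U_CM)

lemma deg_sub: "gdeg E k \<subseteq> gcar E"
  by (auto simp: E_simps CN_zero U_CM)

lemma degE_other: "k \<noteq> 0 \<Longrightarrow> k \<noteq> int n \<Longrightarrow> gdeg E k = {(\<lambda>_. 0, U la)}"
  by (simp add: E_simps)

lemma deg_act_top:
  assumes a: "a \<in> Agr i" and x: "x \<in> P la"
  shows "gact E a (\<lambda>_. 0, cos la x) \<in> gdeg E (int i)"
proof -
  have act: "gact E a (\<lambda>_. 0, cos la x) = (\<lambda>z. \<theta> (e mu * hc 0 z * hc n a * x), cos la (hc 0 a * x))"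
    unfolding gactE_cos[OF x] by simp
  consider "i = 0" | "i = n" | "i \<noteq> 0" "i \<noteq> n" by blast
  then show ?thesis
  proof cases
    case 1
    then have "hc n a = 0" "hc 0 a = a" using hcomp_homog[OF a] n0 by auto
    then show ?thesis using act CM_cosI[OF P_mult[OF _ x]] a 1 n0 th_0 by (simp add: E_simps)
  next
    case 2
    then have h: "hc n a = a" "hc 0 a = 0" using hcomp_homog[OF a] n0 by auto
    have "(\<lambda>z. \<theta> (e mu * hc 0 z * hc n a * x)) \<in> CN"
      using twisted_form_in_CN[OF CN_zero P_A0[OF la x] zero_Agr hcomp_in[of n a]] by simp
    then show ?thesis using act h 2 n0 cos0 by (simp add: E_simps)
  next
    case 3
    then have "hc n a = 0" "hc 0 a = 0" using hcomp_homog[OF a] by auto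
    then show ?thesis using act zero_deg cos0 th_0 by simp
  qed
qed

lemma deg_act_socle:
  assumes a: "a \<in> Agr i" and f: "f \<in> CN"
  shows "gact E a (f, U la) \<in> gdeg E (int i + int n)"
proof -
  have act: "gact E a (f, U la) = (\<lambda>z. f (z * hc 0 a), U la)"
    using gactE_cos[OF subspace_0[OF P_sub[OF la]], of a f] cos0 th_0 by simp
  show ?thesis
  proof (cases "i = 0")
    case True
    then have "a \<in> A0" using a by simp
    then have "(\<lambda>z. f (z * a) + \<theta> (e mu * hc 0 z * 0 * 0)) \<in> CN"
      by (rule twisted_form_in_CN[OF f zero_Agr _ zero_Agr])
    then show ?thesis using act hcomp_homog[OF a] True n0 th_0 by (simp add: E_simps)
  next
    case False
    then have "gact E a (f, U la) = (\<lambda>_. 0, U la)"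
      using act hcomp_homog[OF a] CN_scale[OF f, of 0 0] by simp
    then show ?thesis using zero_deg by simp
  qed
qed

lemma deg_act:
  assumes a: "a \<in> Agr i" and v: "v \<in> gdeg E j"
  shows "gact E a v \<in> gdeg E (int i + j)"
proof -
  consider "j = 0" | "j = int n" | "j \<noteq> 0" "j \<noteq> int n" by blast
  then show ?thesis
  proof cases
    case 1
    then obtain x where "v = (\<lambda>_. 0, cos la x)" "x \<in> P la" using v n0 by (auto simp: E_simps CM_def)
    then show ?thesis using deg_act_top[OF a] 1 by simp
  next
    case 2
    then obtain f where "v = (f, U la)" "f \<in> CN" using v n0 by (auto simp: E_simps)
    then show ?thesis using deg_act_socle[OF a] 2 by simp
  next
    case 3
    then have "v = (\<lambda>_. 0, U la)" using v by (simp add: E_simps)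
    then have "gact E a v = (\<lambda>_. 0, U la)"
      using gactE_cos[OF subspace_0[OF P_sub[OF la]], of a "\<lambda>_. 0"] cos0 th_0 by simp
    then show ?thesis using zero_deg by simp
  qed
qed

lemma deg_add: "v \<in> gdeg E k \<Longrightarrow> w \<in> gdeg E k \<Longrightarrow> gadd E v w \<in> gdeg E k"
proof -
  assume v: "v \<in> gdeg E k" and w: "w \<in> gdeg E k"
  obtain f x where fx: "v = (f, cos la x)" "x \<in> P la" using carE deg_sub v by blast
  obtain g y where gy: "w = (g, cos la y)" "y \<in> P la" using carE deg_sub w by blast
  have sum: "gadd E v w = ((\<lambda>z. f z + g z), cos la (x + y))" unfolding fx gy by (simp add: E_simps addM_cos)
  have "(\<lambda>z. f z + g z) \<in> (if k = int n then CN else {\<lambda>_. 0})"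
    using v w fx gy CN_addI by (auto simp: E_simps)
  moreover have "cos la (x + y) \<in> (if k = 0 then CM else {U la})"
  proof (cases "k = 0")
    case True then show ?thesis using CM_cosI[OF subspace_add[OF P_sub[OF la] fx(2) gy(2)]] by simp
  next
    case False
    then have "cos la x = cos la 0" "cos la y = cos la 0" using v w fx gy cos0 by (auto simp: E_simps)
    then have "cos la (x + y) = cos la 0" using cos_eq U_add by simp
    then show ?thesis using False cos0 by simp
  qed
  ultimately show ?thesis unfolding sum by (simp add: E_simps)
qed

lemma deg_scale: "v \<in> gdeg E k \<Longrightarrow> gact E (scale c 1) v \<in> gdeg E k"
  using deg_act[OF scale_Agr[OF one_Agr], of v k] by simp

lemma gsum_two:
  assumes c: "\<And>i. c i \<in> gdeg E i"
  shows "gsum E c {i. c i \<noteq> gzero E} = gadd E (c 0) (c (int n))"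
proof -
  have other: "c i = gzero E" if "i \<noteq> 0" "i \<noteq> int n" for i
    using c[of i] degE_other[OF that] by (simp add: E_simps)
  have S: "{i. c i \<noteq> gzero E} = {i \<in> {0, int n}. c i \<noteq> gzero E}" using other by blast
  have car: "c (int n) \<in> gcar E" using c deg_sub by auto
  have n0': "(0::int) < int n" using n0 by simp
  consider "c 0 = gzero E" "c (int n) = gzero E" | "c 0 = gzero E" "c (int n) \<noteq> gzero E"
    | "c 0 \<noteq> gzero E" "c (int n) = gzero E" | "c 0 \<noteq> gzero E" "c (int n) \<noteq> gzero E" by blast
  then show ?thesis
  proof cases
    case 1
    then have "{i. c i \<noteq> gzero E} = {}" using S by auto
    then show ?thesis using 1 gadd_zero[OF gzero_car] by (simp add: gsum_def)
  next
    case 2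
    then have "{i. c i \<noteq> gzero E} = {int n}" using S n0' by auto
    then show ?thesis using 2 gadd_comm[OF car gzero_car] by (simp add: gsum_def)
  next
    case 3
    then have "{i. c i \<noteq> gzero E} = {0}" using S n0' by auto
    then show ?thesis using 3 by (simp add: gsum_def)
  next
    case 4
    then have "{i. c i \<noteq> gzero E} = {0, int n}" using S by auto
    moreover have "sorted_list_of_set {0, int n} = [0, int n]" using n0' by simp
    ultimately show ?thesis using gadd_comm[OF car gzero_car] gadd_zero[OF car] by (simp add: gsum_def)
  qed
qed

lemma decomp:
  assumes v: "v \<in> gcar E"
  shows "\<exists>!c. (\<forall>i. c i \<in> gdeg E i) \<and> finite {i. c i \<noteq> gzero E} \<and> v = gsum E c {i. c i \<noteq> gzero E}"
proof -
  obtain f x where fx: "v = (f, cos la x)" "f \<in> CN" "x \<in> P la" using carE[OF v] by blast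
  have fin: "finite {i. c i \<noteq> gzero E}" if "\<And>i. c i \<in> gdeg E i" for c
  proof (rule finite_subset[of _ "{0, int n}"])
    show "{i. c i \<noteq> gzero E} \<subseteq> {0, int n}"
      using that degE_other by (fastforce simp: E_simps(2))
  qed simp
  define c where "c i = (if i = 0 then (\<lambda>_. 0, cos la x) else if i = int n then (f, U la)
    else (\<lambda>_. 0, U la))" for i
  have cd: "c i \<in> gdeg E i" for i
    unfolding c_def using fx CM_cosI n0 by (auto simp: E_simps CN_zero U_CM)
  have cs: "gadd E (c 0) (c (int n)) = v"
    using n0 cos0 addM_cos[of x 0] fx(1) by (simp add: c_def E_simps)
  show ?thesis
  proof (rule ex1I[of _ c])
    show "(\<forall>i. c i \<in> gdeg E i) \<and> finite {i. c i \<noteq> gzero E} \<and> v = gsum E c {i. c i \<noteq> gzero E}"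
      using cd fin[OF cd] gsum_two[OF cd] cs by simp
  next
    fix c' assume c': "(\<forall>i. c' i \<in> gdeg E i) \<and> finite {i. c' i \<noteq> gzero E} \<and> v = gsum E c' {i. c' i \<noteq> gzero E}"
    then have cd': "\<And>i. c' i \<in> gdeg E i" by blast
    obtain X where X: "c' 0 = (\<lambda>_. 0, X)" "X \<in> CM" using cd'[of 0] n0 by (auto simp: E_simps)
    obtain g where g: "c' (int n) = (g, U la)" using cd'[of "int n"] n0 by (auto simp: E_simps)
    obtain y where y: "X = cos la y" using X(2) unfolding CM_def by blast
    have "v = (g, cos la y)" using c' gsum_two[OF cd'] X g y addM_cos[of y 0] cos0 by (simp add: E_simps)
    then have fg: "g = f" "cos la y = cos la x" using fx(1) by auto
    show "c' = c"
    proof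
      fix i
      consider "i = 0" | "i = int n" | "i \<noteq> 0" "i \<noteq> int n" by blast
      then show "c' i = c i"
      proof cases
        case 3
        then show ?thesis using cd'[of i] degE_other[OF 3] by (simp add: c_def)
      qed (use X y g fg n0 in \<open>simp_all add: c_def\<close>)
    qed
  qed
qed

lemma CN_eq_on_span:
  assumes f: "f \<in> CN" and g: "g \<in> CN" and eq: "\<forall>b\<in>S. f b = g b" and sp: "span S = UNIV"
  shows "f = g"
proof
  fix z
  have "z \<in> span S" using sp by simp
  then show "f z = g z"
  proof (induct z rule: span_induct_alt)
    case base
    show ?case using CN_scale[OF f, of 0 0] CN_scale[OF g, of 0 0] by simp
  next
    case (step c s y)
    then show ?case using eq CN_add[OF f] CN_add[OF g] CN_scale[OF f] CN_scale[OF g] by simp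
  qed
qed

text \<open>Coordinates of E: the values of the form on a finite spanning list, followed by the
  coordinates of the coset in A/U(la).\<close>
lemma fin_dim:
  "\<exists>(N::nat) (F :: ('a \<Rightarrow> 'k) \<times> 'a set \<Rightarrow> nat \<Rightarrow> 'k). inj_on F (gcar E) \<and>
        (\<forall>x\<in>gcar E. \<forall>i\<ge>N. F x i = 0) \<and>
        (\<forall>x\<in>gcar E. \<forall>y\<in>gcar E. F (gadd E x y) = (\<lambda>i. F x i + F y i)) \<and>
        (\<forall>c. \<forall>x\<in>gcar E. F (gact E (scale c 1) x) = (\<lambda>i. c * F x i))"
proof -
  obtain B0 where B0: "finite B0" "span B0 = UNIV" using fin_span by blast
  obtain bs where bs: "set bs = B0" using finite_list[OF B0(1)] by blast
  obtain L :: nat and \<phi> :: "'a \<Rightarrow> nat \<Rightarrow> 'k" where coords: "(\<forall>x y. \<phi> (x + y) = (\<lambda>i. \<phi> x i + \<phi> y i)) \<and>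
      (\<forall>c x. \<phi> (scale c x) = (\<lambda>i. c * \<phi> x i)) \<and>
      (\<forall>x. \<phi> x = (\<lambda>_. 0) \<longleftrightarrow> x \<in> U la) \<and> (\<forall>x i. L \<le> i \<longrightarrow> \<phi> x i = (0 :: 'k))"
    using quotient_coordinates[OF U_sub] by blast
  have \<phi>_add: "\<And>x y. \<phi> (x + y) = (\<lambda>i. \<phi> x i + \<phi> y i)"
    and \<phi>_scale: "\<And>c x. \<phi> (scale c x) = (\<lambda>i. c * \<phi> x i)"
    and \<phi>_ker: "\<And>x. \<phi> x = (\<lambda>_. 0) \<longleftrightarrow> x \<in> U la" and \<phi>_fin: "\<And>x i. L \<le> i \<Longrightarrow> \<phi> x i = 0"
    using coords by blast+
  have \<phi>_diff: "\<phi> (x - y) = (\<lambda>i. \<phi> x i - \<phi> y i)" for x y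
    using \<phi>_add[of "x - y" y] by (simp add: fun_eq_iff algebra_simps)
  have \<phi>_rep: "\<phi> (rep (cos la x)) = \<phi> x" for x
    using \<phi>_ker[of "rep (cos la x) - x"] cos_rep \<phi>_diff by (simp add: fun_eq_iff)
  define F where "F v i = (if i < length bs then fst v (bs ! i) else \<phi> (rep (snd v)) (i - length bs))"
    for v :: "('a \<Rightarrow> 'k) \<times> 'a set" and i
  have F_cos: "F (f, cos la x) = (\<lambda>i. if i < length bs then f (bs ! i) else \<phi> x (i - length bs))" for f x
    by (simp add: F_def \<phi>_rep fun_eq_iff)
  show ?thesis
  proof (intro exI[of _ "length bs + L"] exI[of _ F] conjI ballI allI impI)
    show "inj_on F (gcar E)"
    proof (rule inj_onI)
      fix v w assume v: "v \<in> gcar E" and w: "w \<in> gcar E" and Fvw: "F v = F w"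
      obtain f x where fx: "v = (f, cos la x)" "f \<in> CN" using carE[OF v] by blast
      obtain g y where gy: "w = (g, cos la y)" "g \<in> CN" using carE[OF w] by blast
      have "f (bs ! i) = g (bs ! i)" if "i < length bs" for i
        using fun_cong[OF Fvw, of i] that unfolding fx(1) gy(1) F_cos by simp
      then have "\<forall>b\<in>set bs. f b = g b" by (auto simp: in_set_conv_nth)
      then have "f = g" using CN_eq_on_span[OF fx(2) gy(2) _ B0(2)] bs by simp
      moreover have "cos la x = cos la y"
      proof -
        have "\<phi> x j = \<phi> y j" for j
          using fun_cong[OF Fvw, of "length bs + j"] by (simp add: fx gy F_cos)
        then have "x - y \<in> U la" using \<phi>_ker[of "x - y"] \<phi>_diff by (simp add: fun_eq_iff)
        then show ?thesis using cos_eq by blast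
      qed
      ultimately show "v = w" using fx(1) gy(1) by simp
    qed
  next
    fix v i assume "v \<in> gcar E" "length bs + L \<le> i"
    then show "F v i = 0" by (simp add: F_def \<phi>_fin)
  next
    fix v w assume v: "v \<in> gcar E" and w: "w \<in> gcar E"
    obtain f x where fx: "v = (f, cos la x)" using carE[OF v] by blast
    obtain g y where gy: "w = (g, cos la y)" using carE[OF w] by blast
    show "F (gadd E v w) = (\<lambda>i. F v i + F w i)"
      unfolding fx gy by (simp add: E_simps addM_cos F_cos \<phi>_add[of x y] fun_eq_iff)
  next
    fix c v assume v: "v \<in> gcar E"
    obtain f x where fx: "v = (f, cos la x)" "f \<in> CN" "x \<in> P la" using carE[OF v] by blast
    have "gact E (scale c 1) v = ((\<lambda>z. c * f z), cos la (scale c x))"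
      unfolding fx gactE_cos[OF fx(3)] using th_0 CN_scale[OF fx(2)]
      by (simp add: hc0_A0[OF scale_Agr[OF one_Agr]] hcn_A0[OF scale_Agr[OF one_Agr]]
          mult_scale_one scale_one_mult)
    then show "F (gact E (scale c 1) v) = (\<lambda>i. c * F v i)"
      unfolding fx by (simp add: F_cos \<phi>_scale[of c x] fun_eq_iff)
  qed
qed

end

context extension_construction
begin

lemma gzero_deg: "gzero E \<in> gdeg E i" using zero_deg by (simp add: E_simps)

lemma is_gmod_E: "is_gmod scale Agr E"
  unfolding is_gmod_def
  by (intro conjI ballI allI gzero_car gadd_car gadd_assoc gadd_comm gadd_zero gadd_inv act_closed
      act_gadd act_plus act_mult act_one deg_sub gzero_deg deg_add deg_scale deg_act decomp fin_dim)

lemma hom_N_E: "gmod_hom N E (\<lambda>f. (f, gzero M))"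
  unfolding gmod_hom_def M_simps
proof (intro conjI ballI allI)
  fix g assume "g \<in> gcar N"
  then show "(g, U la) \<in> gcar E" using U_CM by (simp add: E_simps N_simps)
next
  fix g h
  show "(gadd N g h, U la) = gadd E (g, U la) (h, U la)"
    using addM_cos[of 0 0] cos0 by (simp add: E_simps N_simps)
next
  fix a g
  show "(gact N a g, U la) = gact E a (g, U la)"
    using gactE_cos[OF subspace_0[OF P_sub[OF la]], of a g] cos0 th_0 by (simp add: N_simps)
next
  fix i g assume "g \<in> gdeg N i"
  then show "(g, U la) \<in> gdeg E i" using U_CM by (simp add: E_def M_simps)
qed

lemma hom_E_M: "gmod_hom E M snd"
  unfolding gmod_hom_def by (simp add: E_def M_simps)

text \<open>A splitting s would send the top X0 = e_la + U(la) of Delta(la) (degree 0) to (0, X0);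
  but y0 X0 = 0 in Delta(la), whereas y0 (0, X0) has first component z \<mapsto> theta(e_mu z_0 y0),
  which is nonzero at z = 1.\<close>
lemma nonsplit: "\<not> (\<exists>s. gmod_hom M E s \<and> (\<forall>x\<in>gcar M. snd (s x) = x))"
proof
  assume "\<exists>s. gmod_hom M E s \<and> (\<forall>x\<in>gcar M. snd (s x) = x)"
  then obtain s where hom: "gmod_hom M E s" and sec: "\<forall>x\<in>gcar M. snd (s x) = x" by blast
  have s_add: "\<forall>x\<in>gcar M. \<forall>y\<in>gcar M. s (gadd M x y) = gadd E (s x) (s y)"
    and s_act: "\<forall>a. \<forall>x\<in>gcar M. s (gact M a x) = gact E a (s x)"
    and s_deg: "\<forall>i. \<forall>x\<in>gdeg M i. s x \<in> gdeg E i"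
    using hom unfolding gmod_hom_def by blast+
  define X0 where "X0 = cos la (e la)"
  have X0: "X0 \<in> CM" unfolding X0_def using CM_cosI[OF e_in_P[OF la]] .
  text \<open>s X0 = (0, X0), since s preserves degree 0 and is a section.\<close>
  have "s X0 \<in> gdeg E 0" using s_deg X0 by (simp add: M_simps)
  then have "fst (s X0) = (\<lambda>_. 0)" using n0 by (auto simp: E_simps)
  moreover have "snd (s X0) = X0" using sec X0 by (simp add: M_simps)
  ultimately have sX0: "s X0 = (\<lambda>_. 0, X0)" by (metis prod.collapse)
  have UM: "U la \<in> gcar M" using U_CM by (simp add: M_simps)
  have "gadd M (U la) (U la) = U la" using addM_cos[of 0 0] cos0 by (simp add: M_simps)
  then have "s (U la) = gadd E (s (U la)) (s (U la))" using s_add UM by metis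
  then have "fst (s (U la)) 1 = fst (s (U la)) 1 + fst (s (U la)) 1"
    by (metis (no_types, lifting) E_simps(3) fst_conv)
  then have fsU: "fst (s (U la)) 1 = 0" by (metis add_cancel_right_right)
  text \<open>On the other hand y0 X0 = 0 in Delta(la) (y0 has degree n > 0).\<close>
  have hy0: "hc 0 y0 = 0" "hc n y0 = y0" using hcomp_homog[OF y0(1)] n0 by auto
  have "gact M y0 X0 = U la" unfolding M_simps X0_def actM_cos hy0 using cos0 by simp
  then have "s (U la) = gact E y0 (\<lambda>_. 0, cos la (e la))" using s_act X0 sX0 X0_def by (metis M_simps(1))
  also have "\<dots> = (\<lambda>z. \<theta> (e mu * hc 0 z * y0 * e la), cos la (hc 0 y0 * e la))"
    using gactE_cos[OF e_in_P[OF la], of y0 "\<lambda>_. 0"] hy0 by simp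
  finally have "fst (s (U la)) 1 = \<theta> (e mu * y0)"
    using hc0_A0[OF one_Agr] y0(2) by (simp add: mult.assoc)
  then show False using fsU th_y0 by simp
qed

theorem ext1_nonzero_Delta_Nabla: "ext1_nonzero scale Agr M N"
  unfolding ext1_nonzero_def
proof (intro exI[of _ E] conjI)
  show "gcar E = gcar N \<times> gcar M" "gzero E = (gzero N, gzero M)"
    by (simp_all add: E_simps M_simps N_simps)
  show "\<forall>x y. gadd E x y = (gadd N (fst x) (fst y), gadd M (snd x) (snd y))"
    "\<forall>i. gdeg E i = gdeg N i \<times> gdeg M i" by (simp_all add: E_def)
qed (rule is_gmod_E hom_N_E hom_E_M nonsplit)+

end

section \<open>Tightness\<close>

lemma (in qh_algebra) not_tight_nonsplit_extension:
  assumes "B \<noteq> UNIV"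
  shows "\<exists>n\<ge>2. \<exists>la\<in>\<Lambda>. \<exists>mu\<in>\<Lambda>.
           ext1_nonzero scale Agr (Delta0 scale Agr \<Lambda> R e la) (shift (int n) (Nabla0 scale Agr \<Lambda> R e mu))"
proof -
  obtain n where n2: "2 \<le> n" and low: "\<forall>i<n. Agr i \<subseteq> B" and notn: "\<not> Agr n \<subseteq> B"
    using least_ungenerated_degree[OF assms] by blast
  interpret W: qh_bimodule scale Agr \<Lambda> R e n "B \<inter> Agr n" by (rule generated_part_bimodule)
  obtain la mu y where la: "la \<in> \<Lambda>" and mu: "mu \<in> \<Lambda>" and y: "y \<in> Agr n" "y * e la = y"
    and ny: "e mu * y \<notin> span (B \<inter> Agr n \<union> W.AnU la \<union> W.VAn mu)"
    using W.extension_weights_exist notn by blast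
  obtain \<theta> :: "'a \<Rightarrow> 'k" where th: "\<forall>x y. \<theta> (x + y) = \<theta> x + \<theta> y" "\<forall>c x. \<theta> (scale c x) = c * \<theta> x"
      "\<forall>x\<in>span (B \<inter> Agr n \<union> W.AnU la \<union> W.VAn mu). \<theta> x = 0" "\<theta> (e mu * y) = 1"
    using separating_functional[OF subspace_span ny] by blast
  have "extension_construction scale Agr \<Lambda> R e n la mu \<theta> y"
  proof (intro extension_construction.intro qh_algebra_axioms extension_construction_axioms.intro)
    show "2 \<le> n" "la \<in> \<Lambda>" "mu \<in> \<Lambda>" "y \<in> Agr n" "y * e la = y" by (fact n2 la mu y)+
    show "\<theta> (e mu * y) \<noteq> 0" using th(4) by simp
    show "Agr i \<subseteq> B" if "i < n" for i using low that by blast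
    show "\<theta> (x + x') = \<theta> x + \<theta> x'" "\<theta> (scale c x) = c * \<theta> x" for x x' c
      using th(1,2) by blast+
    have th0: "\<theta> x = 0" if "x \<in> B \<inter> Agr n \<union> W.AnU la \<union> W.VAn mu" for x
      using th(3) span_base[OF that] by blast
    show "\<theta> x = 0" if "x \<in> B" "x \<in> Agr n" for x
      using th0 that by blast
    show "\<theta> (x * u) = 0" if "x \<in> Agr n" "u \<in> U la" for x u
      by (rule th0) (use that in \<open>auto simp: W.AnU_def\<close>)
    show "\<theta> (v * x) = 0" if "v \<in> V mu" "x \<in> Agr n" for v x
      by (rule th0) (use that in \<open>auto simp: W.VAn_def\<close>)
  qed
  from extension_construction.ext1_nonzero_Delta_Nabla[OF this] show ?thesis using n2 la mu by blast
qed

theorem theorem2p2: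
  fixes scale :: "'k::field \<Rightarrow> 'a::ring_1 \<Rightarrow> 'a"
    and Agr :: "nat \<Rightarrow> 'a set"
    and \<Lambda> :: "'l set"
    and R :: "('l \<times> 'l) set"
    and e :: "'l \<Rightarrow> 'a"
  assumes alg_closed: "\<forall>p :: 'k poly. 0 < degree p \<longrightarrow> (\<exists>x. poly p x = 0)"
    and graded: "fd_pos_graded_algebra scale Agr"
    and qh: "quasi_hereditary scale Agr \<Lambda> R e"
    and Q_Koszul_1: "\<forall>la\<in>\<Lambda>. \<forall>\<mu>\<in>\<Lambda>. \<forall>m::int.
        ext1_nonzero scale Agr (Delta0 scale Agr \<Lambda> R e la) (shift m (Nabla0 scale Agr \<Lambda> R e \<mu>))
        \<longrightarrow> m = 1"
  shows "alg_gen scale (Agr 0 \<union> Agr 1) = UNIV"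
proof (rule ccontr)
  assume "alg_gen scale (Agr 0 \<union> Agr 1) \<noteq> UNIV"
  interpret qh_algebra scale Agr \<Lambda> R e
    by (intro qh_algebra.intro graded_algebra.intro qh_algebra_axioms.intro graded qh)
  obtain n la mu where "2 \<le> n" "la \<in> \<Lambda>" "mu \<in> \<Lambda>"
    "ext1_nonzero scale Agr (Delta0 scale Agr \<Lambda> R e la) (shift (int n) (Nabla0 scale Agr \<Lambda> R e mu))"
    using not_tight_nonsplit_extension \<open>alg_gen scale (Agr 0 \<union> Agr 1) \<noteq> UNIV\<close> by blast
  then show False using Q_Koszul_1 by fastforce
qed

end
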